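(* Let $f:S^1\to\mathbb{R}$ be upper semicontinuous, $\lambda\ge0$, and let $\mu_1=\sum_{j=1}^N r_j\delta_{x_j}\in\mathcal{M}_+(S^1)$ be a finitely supported measure with exactly $N$ atoms. Then the problem \[ \sup_{\mu_0\in\mathcal{B}_\lambda(\mu_1)}\int_{S^1}f\,\mathrm{d}\mu_0 \] admits a maximizer $\mu_0$ that is a finitely supported nonnegative measure with at most $N+2$ support points.
   Context: $S^1$ is the unit circle in $\mathbb{C}$. $\mathcal{B}_\lambda(\mu_1):=\{\mu_0\in\mathcal{M}_+(S^1):\mathcal{U}(\mu_0,\mu_1)\le\lambda\}$, where $\mathcal{U}$ is the Wasserstein–Fisher–Rao distance: for $\mu_0,\mu_1\in\mathcal{M}_+(S^1)$, let $\Gamma(\mu_0,\mu_1)$ be the set of nonnegative Borel measures $\gamma$ on $\mathbb{C}\times\mathbb{C}$ with finite second moment such that $(\theta_i)_\#(r_i^2\gamma)=\mu_i$, $i=0,1$, with $r_i(x_0,x_1)=|x_i|$, $\theta_i(x_0,x_1)=x_i/|x_i|$ (a fixed arbitrary point of $S^1$ if $x_i=0$); $\mathcal{U}(\mu_0,\mu_1):=\inf_{\gamma\in\Gamma(\mu_0,\mu_1)}(\int|x-y|^2\,\mathrm{d}\gamma)^{1/2}$ ($+\infty$ if $\Gamma=\emptyset$). *)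

theory Defs
  imports "HOL-Analysis.Analysis" "HOL-Probability.Probability"
begin

abbreviation S1 :: "complex set" where
  "S1 \<equiv> sphere 0 1"

definition Mplus_S1 :: "complex measure set" where
  "Mplus_S1 = {\<mu>. sets \<mu> = sets (restrict_space borel S1) \<and> emeasure \<mu> S1 < \<infinity>}"

definition usc_on_S1 :: "(complex \<Rightarrow> real) \<Rightarrow> bool" where
  "usc_on_S1 f \<longleftrightarrow> (\<forall>a. openin (top_of_set S1) {x \<in> S1. f x < a})"

definition theta :: "complex \<Rightarrow> complex" where
  "theta x = (if x = 0 then 1 else x / complex_of_real (cmod x))"

text \<open>Admissible plans Gamma(mu0, mu1): nonnegative Borel measures on C x C with finite
  second moment whose homogeneous marginals are mu0 and mu1.\<close>
definition Gamma_WFR :: "complex measure \<Rightarrow> complex measure \<Rightarrow> (complex \<times> complex) measure set" where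
  "Gamma_WFR \<mu>0 \<mu>1 = {\<gamma>. sets \<gamma> = sets (borel :: (complex \<times> complex) measure)
     \<and> (\<integral>\<^sup>+ p. ennreal ((cmod (fst p))\<^sup>2 + (cmod (snd p))\<^sup>2) \<partial>\<gamma>) < \<infinity>
     \<and> (\<forall>A \<in> sets \<mu>0. emeasure \<mu>0 A = (\<integral>\<^sup>+ p. ennreal ((cmod (fst p))\<^sup>2) * indicator A (theta (fst p)) \<partial>\<gamma>))
     \<and> (\<forall>A \<in> sets \<mu>1. emeasure \<mu>1 A = (\<integral>\<^sup>+ p. ennreal ((cmod (snd p))\<^sup>2) * indicator A (theta (snd p)) \<partial>\<gamma>))}"

text \<open>Wasserstein--Fisher--Rao distance U(mu0,mu1) = inf over plans of (int |x-y|^2 d gamma)^(1/2);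
  equal to infinity if there is no plan (INF over the empty set is top).\<close>
definition WFR :: "complex measure \<Rightarrow> complex measure \<Rightarrow> ennreal" where
  "WFR \<mu>0 \<mu>1 = (INF \<gamma> \<in> Gamma_WFR \<mu>0 \<mu>1.
      (let c = (\<integral>\<^sup>+ p. ennreal ((cmod (fst p - snd p))\<^sup>2) \<partial>\<gamma>)
       in if c = \<infinity> then \<infinity> else ennreal (sqrt (enn2real c))))"

definition WFR_ball :: "real \<Rightarrow> complex measure \<Rightarrow> complex measure set" where
  "WFR_ball lam \<mu>1 = {\<mu>0 \<in> Mplus_S1. WFR \<mu>0 \<mu>1 \<le> ennreal lam}"

text \<open>Extended-real integral int f d mu = int f^+ d mu - int f^- d mu (may be -infinity).\<close>
definition ext_integral :: "(complex \<Rightarrow> real) \<Rightarrow> complex measure \<Rightarrow> ereal" where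
  "ext_integral f \<mu> = enn2ereal (\<integral>\<^sup>+ x. ennreal (f x) \<partial>\<mu>) - enn2ereal (\<integral>\<^sup>+ x. ennreal (- f x) \<partial>\<mu>)"

end

theory Submission
  imports Defs
begin

text \<open>The radius constraint is dualised with a multiplier \<open>\<alpha> > max f 0\<close>. A plan moving a point
  \<open>q\<close> to \<open>p\<close> gains \<open>|p|\<^sup>2 f(\<theta> p) - \<alpha> |p - q|\<^sup>2\<close>, which is at most \<open>|q|\<^sup>2\<close> times the supremum of the
  one-atom Lagrangian \<open>\<rho>\<^sup>2 f t - \<alpha> |\<rho> t - y|\<^sup>2\<close> at \<open>y = \<theta> q\<close>; integrating against plans gives
  \<open>\<integral> f d\<nu> \<le> \<alpha> \<lambda>\<^sup>2 + \<Sum>\<^sub>j r\<^sub>j max L\<^sub>j(\<alpha>)\<close> on the whole ball. By upper semicontinuity each \<open>L\<^sub>j(\<alpha>)\<close>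
  has maximisers \<open>(t\<^sub>j, \<rho>\<^sub>j)\<close>, and sending every atom \<open>r\<^sub>j \<delta>\<^sub>x\<^sub>j\<close> to \<open>r\<^sub>j \<rho>\<^sub>j\<^sup>2 \<delta>\<^sub>t\<^sub>j\<close> attains this
  bound once its cost is exactly \<open>\<lambda>\<^sup>2\<close>. At the critical multiplier, limits of maximisers from
  both sides have costs on either side of \<open>\<lambda>\<^sup>2\<close>; switching atoms one at a time and splitting one
  of them hits \<open>\<lambda>\<^sup>2\<close> with \<open>N + 1\<close> atoms. If the cost stays below \<open>\<lambda>\<^sup>2\<close> down to \<open>\<alpha> = max f 0\<close>,
  the remaining budget creates mass at a maximum point of \<open>f\<close>, the \<open>(N + 2)\<close>nd atom; for
  \<open>\<lambda> = 0\<close> one lets \<open>\<alpha> \<rightarrow> \<infinity>\<close> instead.\<close>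

section \<open>Finite atomic measures on the circle\<close>

definition has_at_most_atoms :: "nat \<Rightarrow> complex measure \<Rightarrow> bool" where
  "has_at_most_atoms n \<mu> \<longleftrightarrow> (\<exists>P. finite P \<and> P \<subseteq> S1 \<and> card P \<le> n \<and> emeasure \<mu> (S1 - P) = 0)"

text \<open>The measure \<open>\<Sum>k<K. w k \<delta>\<^sub>z\<^sub>k\<close>; negative weights are truncated to \<open>0\<close>.\<close>

definition finite_atomic :: "nat \<Rightarrow> (nat \<Rightarrow> real) \<Rightarrow> (nat \<Rightarrow> complex) \<Rightarrow> complex measure" where
  "finite_atomic K w z =
     distr (density (count_space {..<K}) (\<lambda>k. ennreal (w k))) (restrict_space borel S1) z"

lemma sets_finite_atomic [simp, measurable_cong]:
  "sets (finite_atomic K w z) = sets (restrict_space borel S1)"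
  by (simp add: finite_atomic_def)

lemma measurable_atoms:
  "\<forall>k<K. z k \<in> S1 \<Longrightarrow>
    z \<in> density (count_space {..<K}) (\<lambda>k. ennreal (w k)) \<rightarrow>\<^sub>M restrict_space borel S1"
  by auto

lemma emeasure_finite_atomic:
  assumes "\<forall>k<K. z k \<in> S1" "A \<in> sets (restrict_space borel S1)"
  shows "emeasure (finite_atomic K w z) A = (\<Sum>k<K. ennreal (w k) * indicator A (z k))"
proof -
  have "emeasure (finite_atomic K w z) A =
      emeasure (density (count_space {..<K}) (\<lambda>k. ennreal (w k))) (z -` A \<inter> {..<K})"
    unfolding finite_atomic_def using measurable_atoms[OF assms(1)] assms(2)
    by (subst emeasure_distr) auto
  also have "\<dots> = (\<Sum>k<K. ennreal (w k) * indicator A (z k))"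
    by (subst emeasure_density)
      (auto simp: nn_integral_count_space_finite indicator_def intro!: sum.cong)
  finally show ?thesis .
qed

lemma nn_integral_finite_atomic:
  assumes "\<forall>k<K. z k \<in> S1" "g \<in> borel_measurable (restrict_space borel S1)"
  shows "(\<integral>\<^sup>+ y. g y \<partial>finite_atomic K w z) = (\<Sum>k<K. ennreal (w k) * g (z k))"
  unfolding finite_atomic_def using measurable_atoms[OF assms(1)] assms(2)
  by (simp add: nn_integral_distr nn_integral_density nn_integral_count_space_finite)

lemma finite_atomic_in_Mplus_S1:
  assumes "\<forall>k<K. z k \<in> S1"
  shows "finite_atomic K w z \<in> Mplus_S1"
proof -
  have "emeasure (finite_atomic K w z) S1 = (\<Sum>k<K. ennreal (w k) * indicator S1 (z k))"
    using assms by (subst emeasure_finite_atomic) (auto simp: sets_restrict_space_iff)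
  also have "\<dots> < \<infinity>"
    by (simp add: ennreal_mult_less_top less_top[symmetric])
  finally show ?thesis by (simp add: Mplus_S1_def)
qed

lemma has_at_most_atoms_finite_atomic:
  assumes "\<forall>k<K. z k \<in> S1"
  shows "has_at_most_atoms K (finite_atomic K w z)"
  unfolding has_at_most_atoms_def
proof (intro exI conjI)
  show "finite (z ` {..<K})" "z ` {..<K} \<subseteq> S1" "card (z ` {..<K}) \<le> K"
    using assms card_image_le[of "{..<K}" z] by auto
  have "S1 - z ` {..<K} \<in> sets (restrict_space borel S1)"
    using finite_imp_closed[of "z ` {..<K}"]
    by (subst sets_restrict_space_iff) (auto intro: borel_closed)
  then show "emeasure (finite_atomic K w z) (S1 - z ` {..<K}) = 0"
    using assms by (simp add: emeasure_finite_atomic)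
qed

lemma ext_integral_finite_atomic:
  assumes z: "\<forall>k<K. z k \<in> S1" and w: "\<forall>k<K. 0 \<le> w k"
    and g: "g \<in> borel_measurable (restrict_space borel S1)"
  shows "ext_integral g (finite_atomic K w z) = ereal (\<Sum>k<K. w k * g (z k))"
proof -
  have part: "(\<integral>\<^sup>+ y. ennreal (h y) \<partial>finite_atomic K w z) = ennreal (\<Sum>k<K. w k * max (h (z k)) 0)"
    if "h \<in> borel_measurable (restrict_space borel S1)" for h
  proof -
    have "(\<integral>\<^sup>+ y. ennreal (h y) \<partial>finite_atomic K w z) = (\<Sum>k<K. ennreal (w k) * ennreal (h (z k)))"
      using z that by (intro nn_integral_finite_atomic) auto
    also have "\<dots> = ennreal (\<Sum>k<K. w k * max (h (z k)) 0)"
      using w by (subst sum_ennreal[symmetric]) (auto intro!: sum.cong simp: ennreal_mult')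
    finally show ?thesis .
  qed
  have "max a 0 - max (- a) 0 = a" for a :: real
    by auto
  then have "(\<Sum>k<K. w k * max (g (z k)) 0) - (\<Sum>k<K. w k * max (- g (z k)) 0) = (\<Sum>k<K. w k * g (z k))"
    by (simp add: sum_subtractf[symmetric] right_diff_distrib[symmetric])
  moreover have nonneg: "0 \<le> (\<Sum>k<K. w k * max (h (z k)) 0)" for h
    using w by (intro sum_nonneg) auto
  ultimately show ?thesis
    using part[OF g] part[of "\<lambda>y. - g y"] nonneg[of g] nonneg[of "\<lambda>y. - g y"] g
    by (simp add: ext_integral_def)
qed

lemma sum_ennreal_indicator:
  assumes "\<And>k. k \<in> I \<Longrightarrow> 0 \<le> c k"
  shows "(\<Sum>k\<in>I. ennreal (c k) * indicator A (z k)) = ennreal (\<Sum>k\<in>I. c k * indicator A (z k))"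
  using assms by (subst sum_ennreal[symmetric]) (auto intro!: sum.cong simp: ennreal_mult' indicator_def)

lemma theta_in_S1 [simp]: "theta z \<in> S1"
  by (auto simp: theta_def norm_divide)

lemma norm_theta [simp]: "cmod (theta z) = 1"
  using theta_in_S1[of z] by (simp del: theta_in_S1)

lemma polar_decomposition: "complex_of_real (cmod z) * theta z = z"
  by (simp add: theta_def)

lemma theta_scaled: "0 < a \<Longrightarrow> s \<in> S1 \<Longrightarrow> theta (complex_of_real a * s) = s"
  by (auto simp: theta_def norm_mult)

lemma norm_sq_theta_scaled:
  "0 \<le> a \<Longrightarrow> s \<in> S1 \<Longrightarrow> (cmod (complex_of_real a * s))\<^sup>2 * g (theta (complex_of_real a * s)) = a\<^sup>2 * g s"
  by (cases "a = 0") (auto simp: theta_scaled norm_mult)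

lemma measurable_theta [measurable]: "theta \<in> borel \<rightarrow>\<^sub>M restrict_space borel S1"
proof (rule measurable_restrict_space2)
  show "theta \<in> borel_measurable borel"
    unfolding theta_def by measurable
qed simp

lemma measurable_fst_complex [measurable]: "fst \<in> borel_measurable (borel :: (complex \<times> complex) measure)"
  by (intro borel_measurable_continuous_onI continuous_intros)

lemma measurable_snd_complex [measurable]: "snd \<in> borel_measurable (borel :: (complex \<times> complex) measure)"
  by (intro borel_measurable_continuous_onI continuous_intros)

lemma nn_integral_homogeneous_marginal:
  fixes \<gamma> :: "(complex \<times> complex) measure" and \<pi> :: "complex \<times> complex \<Rightarrow> complex"
  assumes sets_\<gamma>: "sets \<gamma> = sets borel" and sets_\<mu>: "sets \<mu> = sets (restrict_space borel S1)"
    and \<pi> [measurable]: "\<pi> \<in> borel_measurable borel"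
    and marginal: "\<forall>A \<in> sets \<mu>. emeasure \<mu> A = (\<integral>\<^sup>+ p. ennreal ((cmod (\<pi> p))\<^sup>2) * indicator A (theta (\<pi> p)) \<partial>\<gamma>)"
    and g [measurable]: "g \<in> borel_measurable (restrict_space borel S1)"
  shows "(\<integral>\<^sup>+ y. g y \<partial>\<mu>) = (\<integral>\<^sup>+ p. ennreal ((cmod (\<pi> p))\<^sup>2) * g (theta (\<pi> p)) \<partial>\<gamma>)"
proof -
  note sets_\<gamma> [measurable_cong]
  define \<gamma>' where "\<gamma>' = density \<gamma> (\<lambda>p. ennreal ((cmod (\<pi> p))\<^sup>2))"
  have \<mu>_eq: "\<mu> = distr \<gamma>' (restrict_space borel S1) (\<lambda>p. theta (\<pi> p))"
  proof (rule measure_eqI)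
    fix A assume A: "A \<in> sets \<mu>"
    then have [measurable]: "A \<in> sets (restrict_space borel S1)" using sets_\<mu> by simp
    have "emeasure (distr \<gamma>' (restrict_space borel S1) (\<lambda>p. theta (\<pi> p))) A
        = (\<integral>\<^sup>+ p. ennreal ((cmod (\<pi> p))\<^sup>2) * indicator ((\<lambda>p. theta (\<pi> p)) -` A \<inter> space \<gamma>) p \<partial>\<gamma>)"
      unfolding \<gamma>'_def by (subst emeasure_distr, measurable, subst emeasure_density) auto
    also have "\<dots> = emeasure \<mu> A"
      using marginal A by (auto intro!: nn_integral_cong simp: indicator_def)
    finally show "emeasure \<mu> A = emeasure (distr \<gamma>' (restrict_space borel S1) (\<lambda>p. theta (\<pi> p))) A" ..
  qed (simp add: sets_\<mu>)
  show ?thesis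
    unfolding \<mu>_eq \<gamma>'_def by (simp add: nn_integral_distr nn_integral_density)
qed

lemma sets_Gamma_WFR: "\<gamma> \<in> Gamma_WFR \<mu> \<nu> \<Longrightarrow> sets \<gamma> = sets borel"
  by (simp add: Gamma_WFR_def)

lemma nn_integral_fst_marginal:
  assumes "\<gamma> \<in> Gamma_WFR \<mu> \<nu>" "sets \<mu> = sets (restrict_space borel S1)"
    "g \<in> borel_measurable (restrict_space borel S1)"
  shows "(\<integral>\<^sup>+ y. g y \<partial>\<mu>) = (\<integral>\<^sup>+ p. ennreal ((cmod (fst p))\<^sup>2) * g (theta (fst p)) \<partial>\<gamma>)"
  using assms by (intro nn_integral_homogeneous_marginal) (auto simp: Gamma_WFR_def)

lemma nn_integral_snd_marginal:
  assumes "\<gamma> \<in> Gamma_WFR \<mu> \<nu>" "sets \<nu> = sets (restrict_space borel S1)"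
    "g \<in> borel_measurable (restrict_space borel S1)"
  shows "(\<integral>\<^sup>+ y. g y \<partial>\<nu>) = (\<integral>\<^sup>+ p. ennreal ((cmod (snd p))\<^sup>2) * g (theta (snd p)) \<partial>\<gamma>)"
  using assms by (intro nn_integral_homogeneous_marginal) (auto simp: Gamma_WFR_def)

lemma Gamma_WFR_cost_less:
  assumes "WFR \<mu> \<nu> < ennreal c"
  shows "\<exists>\<gamma>\<in>Gamma_WFR \<mu> \<nu>. (\<integral>\<^sup>+ z. ennreal ((cmod (fst z - snd z))\<^sup>2) \<partial>\<gamma>) < ennreal (c\<^sup>2)"
proof -
  obtain \<gamma> where \<gamma>: "\<gamma> \<in> Gamma_WFR \<mu> \<nu>"
    and less: "(let k = (\<integral>\<^sup>+ z. ennreal ((cmod (fst z - snd z))\<^sup>2) \<partial>\<gamma>)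
       in if k = \<infinity> then \<infinity> else ennreal (sqrt (enn2real k))) < ennreal c"
    using assms unfolding WFR_def by (auto simp: INF_less_iff)
  define k where "k = (\<integral>\<^sup>+ z. ennreal ((cmod (fst z - snd z))\<^sup>2) \<partial>\<gamma>)"
  have k_fin: "k \<noteq> \<infinity>"
    using less by (auto simp: k_def[symmetric] Let_def)
  then have "sqrt (enn2real k) < c"
    using less ennreal_less_iff by (fastforce simp: k_def[symmetric] Let_def)
  then have "(sqrt (enn2real k))\<^sup>2 < c\<^sup>2"
    by (intro power_strict_mono) auto
  then have "k < ennreal (c\<^sup>2)"
    using k_fin by (cases k) (auto simp: ennreal_less_iff)
  then show ?thesis
    using \<gamma> by (auto simp: k_def)
qed

lemma WFR_discrete_plan_le:
  fixes p q :: "nat \<Rightarrow> complex"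
  assumes sets_\<mu>: "sets \<mu> = sets (restrict_space borel S1)"
    and marginal: "\<forall>A\<in>sets \<mu>. emeasure \<mu> A = (\<Sum>k<K. ennreal ((cmod (q k))\<^sup>2) * indicator A (theta (q k)))"
  shows "WFR (finite_atomic K (\<lambda>k. (cmod (p k))\<^sup>2) (\<lambda>k. theta (p k))) \<mu>
           \<le> ennreal (sqrt (\<Sum>k<K. (cmod (p k - q k))\<^sup>2))"
proof -
  define \<mu>0 where "\<mu>0 = finite_atomic K (\<lambda>k. (cmod (p k))\<^sup>2) (\<lambda>k. theta (p k))"
  define \<gamma> :: "(complex \<times> complex) measure" where "\<gamma> = distr (count_space {..<K}) borel (\<lambda>k. (p k, q k))"
  have integral_\<gamma>: "(\<integral>\<^sup>+ z. h z \<partial>\<gamma>) = (\<Sum>k<K. h (p k, q k))" if "h \<in> borel_measurable borel" for h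
    unfolding \<gamma>_def using that by (simp add: nn_integral_distr nn_integral_count_space_finite)
  have "\<gamma> \<in> Gamma_WFR \<mu>0 \<mu>"
    unfolding Gamma_WFR_def
  proof (intro CollectI conjI ballI)
    show "sets \<gamma> = sets borel"
      by (simp add: \<gamma>_def)
    show "(\<integral>\<^sup>+ z. ennreal ((cmod (fst z))\<^sup>2 + (cmod (snd z))\<^sup>2) \<partial>\<gamma>) < \<infinity>"
      by (subst integral_\<gamma>) auto
  next
    fix A assume "A \<in> sets \<mu>0"
    then have [measurable]: "A \<in> sets (restrict_space borel S1)"
      by (simp add: \<mu>0_def)
    show "emeasure \<mu>0 A = (\<integral>\<^sup>+ z. ennreal ((cmod (fst z))\<^sup>2) * indicator A (theta (fst z)) \<partial>\<gamma>)"
      unfolding \<mu>0_def by (subst integral_\<gamma>) (auto simp: emeasure_finite_atomic)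
  next
    fix A assume A: "A \<in> sets \<mu>"
    then have [measurable]: "A \<in> sets (restrict_space borel S1)"
      by (simp add: sets_\<mu>)
    show "emeasure \<mu> A = (\<integral>\<^sup>+ z. ennreal ((cmod (snd z))\<^sup>2) * indicator A (theta (snd z)) \<partial>\<gamma>)"
      using marginal A by (subst integral_\<gamma>) auto
  qed
  moreover have "(\<integral>\<^sup>+ z. ennreal ((cmod (fst z - snd z))\<^sup>2) \<partial>\<gamma>) = ennreal (\<Sum>k<K. (cmod (p k - q k))\<^sup>2)"
    by (subst integral_\<gamma>) auto
  ultimately show ?thesis
    unfolding \<mu>0_def[symmetric] WFR_def by (intro INF_lower2) (auto simp: Let_def sum_nonneg)
qed

lemma usc_attains_max:
  fixes g :: "'a::topological_space \<Rightarrow> real"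
  assumes "compact K" "K \<noteq> {}" and closed: "\<And>a. closed {x\<in>K. a \<le> g x}"
  shows "\<exists>x\<in>K. \<forall>y\<in>K. g y \<le> g x"
proof -
  have "K \<inter> (\<Inter>y\<in>K. {x\<in>K. g y \<le> g x}) \<noteq> {}"
  proof (rule compact_imp_fip_image[OF assms(1) closed])
    fix Y assume Y: "finite Y" "Y \<subseteq> K"
    show "K \<inter> (\<Inter>y\<in>Y. {x\<in>K. g y \<le> g x}) \<noteq> {}"
    proof (cases "Y = {}")
      case False
      have "Max (g ` Y) \<in> g ` Y"
        using Y(1) False by (intro Max_in) auto
      then obtain y0 where "y0 \<in> Y" "g y0 = Max (g ` Y)"
        by auto
      then have "y0 \<in> K \<inter> (\<Inter>y\<in>Y. {x\<in>K. g y \<le> g x})"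
        using Y by (auto intro!: Max_ge)
      then show ?thesis
        by blast
    qed (use assms(2) in auto)
  qed
  then show ?thesis
    by auto
qed

lemma closed_superlevel_sequentially:
  fixes g :: "'a::first_countable_topology \<Rightarrow> real"
  assumes "closed K"
    and usc: "\<And>s l e. (\<forall>n. s n \<in> K) \<Longrightarrow> s \<longlonglongrightarrow> l \<Longrightarrow> l \<in> K \<Longrightarrow> 0 < e \<Longrightarrow>
               eventually (\<lambda>n. g (s n) < g l + e) sequentially"
  shows "closed {x\<in>K. a \<le> g x}"
  unfolding closed_sequential_limits
proof (intro allI impI, elim conjE)
  fix s l assume s: "\<forall>n. s n \<in> {x\<in>K. a \<le> g x}" "s \<longlonglongrightarrow> l"
  then have sK: "\<forall>n. s n \<in> K" and s_ge: "\<forall>n. a \<le> g (s n)"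
    by auto
  have "l \<in> K"
    using \<open>closed K\<close> sK s(2) closed_sequential_limits by blast
  moreover have "a \<le> g l"
  proof (rule ccontr)
    assume "\<not> a \<le> g l"
    then have "eventually (\<lambda>n. g (s n) < g l + (a - g l)) sequentially"
      using sK s(2) \<open>l \<in> K\<close> by (intro usc) auto
    then have "\<exists>n. g (s n) < a"
      using eventually_happens[of _ sequentially] by auto
    then show False
      using s_ge by (auto simp: not_less[symmetric])
  qed
  ultimately show "l \<in> {x\<in>K. a \<le> g x}"
    by simp
qed

lemma usc_on_S1_measurable:
  assumes "usc_on_S1 f"
  shows "f \<in> borel_measurable (restrict_space borel S1)"
proof (subst borel_measurable_iff_less, intro allI)
  fix a
  obtain T where T: "open T" "{x \<in> S1. f x < a} = S1 \<inter> T"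
    using assms unfolding usc_on_S1_def openin_open by blast
  then have "{w \<in> space (restrict_space borel S1). f w < a} = S1 \<inter> T"
    by (auto simp: space_restrict_space)
  also have "\<dots> \<in> sets (restrict_space borel S1)"
    using T(1) by (subst sets_restrict_space_iff) auto
  finally show "{w \<in> space (restrict_space borel S1). f w < a} \<in> sets (restrict_space borel S1)" .
qed

lemma usc_on_S1_sequentially:
  assumes "usc_on_S1 f" "s \<longlonglongrightarrow> l" "\<forall>n. s n \<in> S1" "l \<in> S1" "0 < e"
  shows "eventually (\<lambda>n. f (s n) < f l + e) sequentially"
proof -
  obtain T where T: "open T" "{x \<in> S1. f x < f l + e} = S1 \<inter> T"
    using assms(1) unfolding usc_on_S1_def openin_open by blast
  have below: "f y < f l + e" if "y \<in> S1" "y \<in> T" for y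
  proof -
    have "y \<in> S1 \<inter> T"
      using that by (rule IntI)
    then show ?thesis
      by (simp only: T(2)[symmetric] mem_Collect_eq)
  qed
  have "l \<in> {x \<in> S1. f x < f l + e}"
    using assms(4,5) by simp
  then have "l \<in> T"
    by (simp only: T(2) Int_iff)
  with assms(2) T(1) have "eventually (\<lambda>n. s n \<in> T) sequentially"
    by (rule topological_tendstoD)
  then show ?thesis
    by eventually_elim (use below assms(3) in simp)
qed

lemma usc_on_S1_attains_max:
  assumes "usc_on_S1 f"
  shows "\<exists>t\<in>S1. \<forall>y\<in>S1. f y \<le> f t"
proof (rule usc_attains_max)
  fix a
  have "closedin (top_of_set S1) (S1 - {x \<in> S1. f x < a})"
    using assms unfolding usc_on_S1_def by (intro closedin_diff) auto
  moreover have "S1 - {x \<in> S1. f x < a} = {x \<in> S1. a \<le> f x}"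
    by auto
  ultimately have "closedin (top_of_set S1) {x \<in> S1. a \<le> f x}"
    by simp
  then show "closed {x \<in> S1. a \<le> f x}"
    by (rule closedin_closed_trans) simp
qed auto

lemma usc_on_S1_scaled_sequentially:
  assumes "usc_on_S1 f" and t: "ts \<longlonglongrightarrow> t" "\<forall>n. ts n \<in> S1" "t \<in> S1"
    and \<rho>: "\<rho>s \<longlonglongrightarrow> \<rho>" and "0 < e"
  shows "eventually (\<lambda>n. (\<rho>s n)\<^sup>2 * f (ts n) < \<rho>\<^sup>2 * f t + e) sequentially"
proof -
  define \<delta> where "\<delta> = e / (\<rho>\<^sup>2 + 1)"
  have pos: "0 < \<rho>\<^sup>2 + 1"
    using zero_le_power2[of \<rho>] by linarith
  then have "0 < \<delta>"
    using \<open>0 < e\<close> by (simp add: \<delta>_def)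
  have "\<rho>\<^sup>2 / (\<rho>\<^sup>2 + 1) < 1"
    using pos by simp
  then have "e * (\<rho>\<^sup>2 / (\<rho>\<^sup>2 + 1)) < e * 1"
    using \<open>0 < e\<close> by (intro mult_strict_left_mono)
  then have "\<rho>\<^sup>2 * \<delta> < e"
    by (simp add: \<delta>_def mult.commute)
  then have "\<rho>\<^sup>2 * (f t + \<delta>) < \<rho>\<^sup>2 * f t + e"
    by (simp add: distrib_left)
  moreover have "(\<lambda>n. (\<rho>s n)\<^sup>2 * (f t + \<delta>)) \<longlonglongrightarrow> \<rho>\<^sup>2 * (f t + \<delta>)"
    using \<rho> by (intro tendsto_intros)
  ultimately have "eventually (\<lambda>n. (\<rho>s n)\<^sup>2 * (f t + \<delta>) < \<rho>\<^sup>2 * f t + e) sequentially"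
    by (simp add: order_tendstoD)
  moreover have "eventually (\<lambda>n. f (ts n) < f t + \<delta>) sequentially"
    using usc_on_S1_sequentially[OF assms(1) t \<open>0 < \<delta>\<close>] .
  ultimately show ?thesis
  proof eventually_elim
    case (elim n)
    have "(\<rho>s n)\<^sup>2 * f (ts n) \<le> (\<rho>s n)\<^sup>2 * (f t + \<delta>)"
      using elim(2) by (intro mult_left_mono) auto
    with elim(1) show ?case
      by linarith
  qed
qed

lemma eventually_sum_less:
  fixes a :: "'b \<Rightarrow> 'a \<Rightarrow> real"
  assumes "finite I" "0 < e"
    and "\<And>j e. j \<in> I \<Longrightarrow> 0 < e \<Longrightarrow> eventually (\<lambda>n. a n j < b j + e) F"
  shows "eventually (\<lambda>n. (\<Sum>j\<in>I. a n j) < (\<Sum>j\<in>I. b j) + e) F"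
  using assms
proof (induction I arbitrary: e rule: finite_induct)
  case (insert i I)
  have "eventually (\<lambda>n. a n i < b i + e / 2) F"
    using insert.prems(1) by (intro insert.prems(2)) auto
  moreover have "eventually (\<lambda>n. (\<Sum>j\<in>I. a n j) < (\<Sum>j\<in>I. b j) + e / 2) F"
  proof (rule insert.IH)
    show "0 < e / 2"
      using insert.prems(1) by simp
    show "eventually (\<lambda>n. a n j < b j + e') F" if "j \<in> I" "0 < e'" for j e'
      using that by (intro insert.prems(2)) auto
  qed
  ultimately show ?case
    by eventually_elim (use insert.hyps in simp)
qed simp

section \<open>The one-atom Lagrangian\<close>

text \<open>\<open>atom_cost y t \<rho>\<close> is the transport cost of turning a unit mass at \<open>y\<close> into the mass \<open>\<rho>\<^sup>2\<close>
  at \<open>t\<close>, and \<open>lagrangian\<close> penalises the gain \<open>\<rho>\<^sup>2 f t\<close> by \<open>\<alpha>\<close> times this cost.\<close>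

definition atom_cost :: "complex \<Rightarrow> complex \<Rightarrow> real \<Rightarrow> real" where
  "atom_cost y t \<rho> = (cmod (complex_of_real \<rho> * t - y))\<^sup>2"

definition lagrangian :: "(complex \<Rightarrow> real) \<Rightarrow> real \<Rightarrow> complex \<Rightarrow> complex \<Rightarrow> real \<Rightarrow> real" where
  "lagrangian f \<alpha> y t \<rho> = \<rho>\<^sup>2 * f t - \<alpha> * atom_cost y t \<rho>"

lemma atom_cost_nonneg: "0 \<le> atom_cost y t \<rho>"
  by (simp add: atom_cost_def)

lemma atom_cost_self: "atom_cost y y 1 = 0"
  by (simp add: atom_cost_def)

lemma atom_cost_zero: "y \<in> S1 \<Longrightarrow> atom_cost y t 0 = 1"
  by (simp add: atom_cost_def)

lemma abs_rho_le_atom_cost: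
  assumes "y \<in> S1" "t \<in> S1" "0 \<le> \<rho>"
  shows "\<bar>\<rho> - 1\<bar> \<le> sqrt (atom_cost y t \<rho>)"
  using norm_triangle_ineq3[of "complex_of_real \<rho> * t" y] assms
  by (simp add: atom_cost_def norm_mult)

lemma atom_cost_ge:
  assumes "y \<in> S1" "t \<in> S1" "0 \<le> \<rho>"
  shows "(\<rho> - 1)\<^sup>2 \<le> atom_cost y t \<rho>"
proof -
  have "\<bar>\<rho> - 1\<bar>\<^sup>2 \<le> (sqrt (atom_cost y t \<rho>))\<^sup>2"
    using abs_rho_le_atom_cost[OF assms] by (intro power_mono) auto
  then show ?thesis
    by (simp add: atom_cost_nonneg)
qed

lemma rho_le_atom_cost: "y \<in> S1 \<Longrightarrow> t \<in> S1 \<Longrightarrow> 0 \<le> \<rho> \<Longrightarrow> \<rho> \<le> 1 + sqrt (atom_cost y t \<rho>)"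
  using abs_rho_le_atom_cost[of y t \<rho>] by linarith

lemma atom_cost_scaled:
  assumes "0 < b"
  shows "b\<^sup>2 * atom_cost y t (a / b) = (cmod (complex_of_real a * t - complex_of_real b * y))\<^sup>2"
proof -
  have "complex_of_real a * t - complex_of_real b * y = complex_of_real b * (complex_of_real (a / b) * t - y)"
    using assms by (simp add: right_diff_distrib)
  then show ?thesis
    using assms by (simp add: atom_cost_def norm_mult power_mult_distrib)
qed

lemma atom_cost_sqrt_scaled:
  assumes "0 \<le> u"
  shows "(cmod (complex_of_real (sqrt u * \<rho>) * s - complex_of_real (sqrt u) * y))\<^sup>2 = u * atom_cost y s \<rho>"
proof -
  have "complex_of_real (sqrt u * \<rho>) * s - complex_of_real (sqrt u) * y
      = complex_of_real (sqrt u) * (complex_of_real \<rho> * s - y)"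
    by (simp add: algebra_simps)
  then show ?thesis
    using assms by (simp add: atom_cost_def norm_mult power_mult_distrib)
qed

lemma scaled_atom:
  fixes c \<sigma> :: real and y s :: complex and g :: "complex \<Rightarrow> real"
  assumes "0 \<le> c" "c = 0 \<or> (y \<in> S1 \<and> s \<in> S1 \<and> 0 \<le> \<sigma>)"
  shows "(cmod (complex_of_real (sqrt c) * y))\<^sup>2 * g (theta (complex_of_real (sqrt c) * y)) = c * g y"
    and "(cmod (complex_of_real (sqrt c * \<sigma>) * s))\<^sup>2 * g (theta (complex_of_real (sqrt c * \<sigma>) * s))
           = c * (\<sigma>\<^sup>2 * g s)"
    and "(cmod (complex_of_real (sqrt c * \<sigma>) * s - complex_of_real (sqrt c) * y))\<^sup>2 = c * atom_cost y s \<sigma>"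
  using assms norm_sq_theta_scaled[of "sqrt c" y g] norm_sq_theta_scaled[of "sqrt c * \<sigma>" s g]
    atom_cost_sqrt_scaled[of c \<sigma> s y]
  by (auto simp: power_mult_distrib)

lemma lagrangian_zero: "y \<in> S1 \<Longrightarrow> lagrangian f \<alpha> y t 0 = - \<alpha>"
  by (simp add: lagrangian_def atom_cost_zero)

lemma lagrangian_self: "lagrangian f \<alpha> y y 1 = f y"
  by (simp add: lagrangian_def atom_cost_self)

lemma sum_gain_eq:
  "(\<Sum>j\<in>I. c j * ((\<rho> j)\<^sup>2 * f (t j)))
     = (\<Sum>j\<in>I. c j * lagrangian f \<alpha> (y j) (t j) (\<rho> j)) + \<alpha> * (\<Sum>j\<in>I. c j * atom_cost (y j) (t j) (\<rho> j))"
  by (simp add: lagrangian_def sum_distrib_left right_diff_distrib sum_subtractf mult.left_commute)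

lemma lagrangian_le_quadratic:
  assumes "0 \<le> \<alpha>" "\<forall>y\<in>S1. f y \<le> M" "y \<in> S1" "t \<in> S1" "0 \<le> \<rho>"
  shows "lagrangian f \<alpha> y t \<rho> \<le> \<rho>\<^sup>2 * (M - \<alpha>) + 2 * \<alpha> * \<rho> - \<alpha>"
proof -
  have "\<rho>\<^sup>2 * f t \<le> \<rho>\<^sup>2 * M"
    using assms by (simp add: mult_left_mono)
  moreover have "\<alpha> * (\<rho> - 1)\<^sup>2 \<le> \<alpha> * atom_cost y t \<rho>"
    using assms atom_cost_ge by (simp add: mult_left_mono)
  ultimately show ?thesis
    by (simp add: lagrangian_def power2_eq_square algebra_simps)
qed

lemma lagrangian_le:
  assumes "M < \<alpha>" "0 < \<alpha>" "\<forall>y\<in>S1. f y \<le> M" "y \<in> S1" "t \<in> S1" "0 \<le> \<rho>"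
  shows "lagrangian f \<alpha> y t \<rho> \<le> \<alpha>\<^sup>2 / (\<alpha> - M)"
proof -
  have "(\<rho>\<^sup>2 * (M - \<alpha>) + 2 * \<alpha> * \<rho> - \<alpha>) * (\<alpha> - M)
      = \<alpha>\<^sup>2 - ((\<alpha> - M) * \<rho> - \<alpha>)\<^sup>2 - \<alpha> * (\<alpha> - M)"
    by (simp add: power2_eq_square algebra_simps)
  moreover have "0 < \<alpha> * (\<alpha> - M)"
    using assms(1,2) by simp
  ultimately have "(\<rho>\<^sup>2 * (M - \<alpha>) + 2 * \<alpha> * \<rho> - \<alpha>) * (\<alpha> - M) \<le> \<alpha>\<^sup>2"
    using zero_le_power2[of "(\<alpha> - M) * \<rho> - \<alpha>"] by linarith
  then have "\<rho>\<^sup>2 * (M - \<alpha>) + 2 * \<alpha> * \<rho> - \<alpha> \<le> \<alpha>\<^sup>2 / (\<alpha> - M)"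
    using assms(1) by (simp add: pos_le_divide_eq)
  with lagrangian_le_quadratic[of \<alpha> f M y t \<rho>] assms show ?thesis
    by linarith
qed

lemma lagrangian_less_neg:
  assumes "M < \<alpha>" "0 < \<alpha>" "\<forall>y\<in>S1. f y \<le> M" "y \<in> S1" "t \<in> S1" "2 * \<alpha> / (\<alpha> - M) < \<rho>"
  shows "lagrangian f \<alpha> y t \<rho> < - \<alpha>"
proof -
  have "0 < 2 * \<alpha> / (\<alpha> - M)"
    using assms(1,2) by simp
  then have "0 < \<rho>"
    using assms(6) by linarith
  moreover have "2 * \<alpha> < \<rho> * (\<alpha> - M)"
    using assms(1,6) by (simp add: field_simps)
  ultimately have "\<rho> * (2 * \<alpha>) < \<rho> * (\<rho> * (\<alpha> - M))"
    by (intro mult_strict_left_mono)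
  then have "\<rho>\<^sup>2 * (M - \<alpha>) + 2 * \<alpha> * \<rho> < 0"
    by (simp add: power2_eq_square algebra_simps)
  with lagrangian_le_quadratic[of \<alpha> f M y t \<rho>] assms \<open>0 < \<rho>\<close> show ?thesis
    by linarith
qed

text \<open>Weak duality at a single pair of points: a plan moving \<open>q = b y\<close> to \<open>p = a t\<close> gains at most
  \<open>|q|\<^sup>2\<close> times the supremum of the Lagrangian at \<open>y\<close>; for \<open>b = 0\<close> this is where \<open>f < \<alpha>\<close> is used.\<close>

lemma lagrangian_bound_scaled:
  assumes "0 \<le> a" "0 \<le> b" "t \<in> S1" "f t < \<alpha>" "\<forall>\<rho>\<ge>0. lagrangian f \<alpha> y t \<rho> \<le> U"
  shows "a\<^sup>2 * f t - \<alpha> * (cmod (complex_of_real a * t - complex_of_real b * y))\<^sup>2 \<le> b\<^sup>2 * U"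
proof (cases "b = 0")
  case True
  have "a\<^sup>2 * (f t - \<alpha>) \<le> 0"
    using assms by (simp add: mult_nonneg_nonpos)
  then show ?thesis
    using True assms(3) by (simp add: norm_mult algebra_simps)
next
  case False
  then have "0 < b"
    using assms(2) by simp
  then have "b\<^sup>2 * lagrangian f \<alpha> y t (a / b) \<le> b\<^sup>2 * U"
    using assms by (simp add: mult_left_mono)
  moreover have "b\<^sup>2 * lagrangian f \<alpha> y t (a / b) = (b\<^sup>2 * (a / b)\<^sup>2) * f t - \<alpha> * (b\<^sup>2 * atom_cost y t (a / b))"
    by (simp add: lagrangian_def algebra_simps)
  moreover have "b\<^sup>2 * (a / b)\<^sup>2 = a\<^sup>2"
    using \<open>0 < b\<close> by (simp add: power_divide)
  ultimately show ?thesis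
    using atom_cost_scaled[OF \<open>0 < b\<close>, of y t a] by simp
qed

lemma lagrangian_usc:
  assumes "usc_on_S1 f" and \<alpha>: "\<alpha>s \<longlonglongrightarrow> \<alpha>" and t: "ts \<longlonglongrightarrow> t" "\<forall>n. ts n \<in> S1" "t \<in> S1"
    and \<rho>: "\<rho>s \<longlonglongrightarrow> \<rho>" and "0 < e"
  shows "eventually (\<lambda>n. lagrangian f (\<alpha>s n) y (ts n) (\<rho>s n) < lagrangian f \<alpha> y t \<rho> + e) sequentially"
proof -
  have "eventually (\<lambda>n. (\<rho>s n)\<^sup>2 * f (ts n) < \<rho>\<^sup>2 * f t + e / 2) sequentially"
    using usc_on_S1_scaled_sequentially[OF assms(1) t \<rho>] \<open>0 < e\<close> by simp
  moreover have "(\<lambda>n. \<alpha>s n * atom_cost y (ts n) (\<rho>s n)) \<longlonglongrightarrow> \<alpha> * atom_cost y t \<rho>"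
    unfolding atom_cost_def using \<alpha> t(1) \<rho> by (intro tendsto_intros)
  then have "eventually (\<lambda>n. \<alpha> * atom_cost y t \<rho> - e / 2 < \<alpha>s n * atom_cost y (ts n) (\<rho>s n)) sequentially"
    using \<open>0 < e\<close> by (intro order_tendstoD) auto
  ultimately show ?thesis
    by eventually_elim (simp add: lagrangian_def)
qed

lemma lagrangian_attains_max:
  assumes "usc_on_S1 f" "0 \<le> R"
  shows "\<exists>t\<in>S1. \<exists>\<rho>\<in>{0..R}. \<forall>t'\<in>S1. \<forall>\<rho>'\<in>{0..R}. lagrangian f \<alpha> y t' \<rho>' \<le> lagrangian f \<alpha> y t \<rho>"
proof -
  define g where "g z = lagrangian f \<alpha> y (fst z) (snd z)" for z
  have "\<exists>z\<in>S1 \<times> {0..R}. \<forall>w\<in>S1 \<times> {0..R}. g w \<le> g z"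
  proof (rule usc_attains_max)
    show "compact (S1 \<times> {0..R})"
      by (intro compact_Times compact_sphere compact_Icc)
    have "(1, 0) \<in> S1 \<times> {0..R}"
      using assms(2) by simp
    then show "S1 \<times> {0..R} \<noteq> {}"
      by blast
    show "closed {z \<in> S1 \<times> {0..R}. a \<le> g z}" for a
    proof (rule closed_superlevel_sequentially)
      show "closed (S1 \<times> {0..R})"
        by (intro closed_Times closed_sphere closed_atLeastAtMost)
      fix s l and e :: real
      assume s: "\<forall>n. s n \<in> S1 \<times> {0..R}" "s \<longlonglongrightarrow> l" "l \<in> S1 \<times> {0..R}" "0 < e"
      then have "\<forall>n. fst (s n) \<in> S1" "fst l \<in> S1"
        by (auto simp: mem_Times_iff)
      then show "eventually (\<lambda>n. g (s n) < g l + e) sequentially"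
        unfolding g_def
        using lagrangian_usc[OF assms(1) tendsto_const tendsto_fst[OF s(2)] _ _ tendsto_snd[OF s(2)] s(4)]
        by blast
    qed
  qed
  then obtain z where "z \<in> S1 \<times> {0..R}" "\<forall>w\<in>S1 \<times> {0..R}. g w \<le> g z"
    by blast
  then show ?thesis
    unfolding g_def by (intro bexI[of _ "fst z"] bexI[of _ "snd z"]) (auto simp: mem_Times_iff)
qed

lemma ennreal_split_le:
  fixes a b \<alpha> d u v :: real
  assumes "0 \<le> a" "0 \<le> b" "0 \<le> \<alpha>" "0 \<le> d" "a * u - \<alpha> * d \<le> b * v"
  shows "ennreal a * ennreal u + ennreal b * ennreal (- v)
           \<le> ennreal \<alpha> * ennreal d + ennreal b * ennreal v + ennreal a * ennreal (- u)"
proof -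
  have "max 0 u = u + max 0 (- u)" "max 0 v = v + max 0 (- v)"
    by auto
  then have "a * max 0 u + b * max 0 (- v) \<le> \<alpha> * d + b * max 0 v + a * max 0 (- u)"
    using assms(5) by (simp add: distrib_left)
  then have "ennreal (a * max 0 u + b * max 0 (- v)) \<le> ennreal (\<alpha> * d + b * max 0 v + a * max 0 (- u))"
    by (rule ennreal_leI)
  then show ?thesis
    using assms(1-4) by (simp add: ennreal_mult')
qed

lemma enn2ereal_diff_le:
  fixes A B P Q c :: ennreal
  assumes "A < \<infinity>" "P < \<infinity>" "A + Q \<le> ennreal \<alpha> * c + P + B" "c \<le> ennreal C" "0 \<le> \<alpha>" "0 \<le> C"
  shows "enn2ereal A - enn2ereal B \<le> ereal (\<alpha> * C) + (enn2ereal P - enn2ereal Q)"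
proof (cases "B = \<infinity>")
  case True
  then show ?thesis
    using assms(1) by (cases A) auto
next
  case False
  have "ennreal \<alpha> * c \<le> ennreal \<alpha> * ennreal C"
    using assms(4) by (rule mult_left_mono) simp
  then have le: "A + Q \<le> ennreal \<alpha> * ennreal C + P + B"
    using assms(3) by (meson add_right_mono order_trans)
  obtain a p b where "A = ennreal a" "P = ennreal p" "B = ennreal b" "0 \<le> a" "0 \<le> p" "0 \<le> b"
    using assms(1,2) False by (cases A; cases P; cases B) auto
  moreover from this le obtain q where "Q = ennreal q" "0 \<le> q"
    using assms(5,6) by (cases Q) (auto simp: top_unique ennreal_mult[symmetric] ennreal_plus[symmetric] simp del: ennreal_plus)
  ultimately show ?thesis
    using le assms(5,6)
    by (simp add: ennreal_mult[symmetric] ennreal_plus[symmetric] del: ennreal_plus)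
qed

lemma ext_integral_le_plan:
  fixes g \<phi> :: "complex \<Rightarrow> real"
  assumes \<gamma>: "\<gamma> \<in> Gamma_WFR \<nu> \<mu>"
    and sets: "sets \<nu> = sets (restrict_space borel S1)" "sets \<mu> = sets (restrict_space borel S1)"
    and g [measurable]: "g \<in> borel_measurable (restrict_space borel S1)"
    and \<phi> [measurable]: "\<phi> \<in> borel_measurable (restrict_space borel S1)"
    and pointwise: "\<And>p q. (cmod p)\<^sup>2 * g (theta p) - \<alpha> * (cmod (p - q))\<^sup>2 \<le> (cmod q)\<^sup>2 * \<phi> (theta q)"
    and \<alpha>: "0 \<le> \<alpha>"
    and cost: "(\<integral>\<^sup>+ z. ennreal ((cmod (fst z - snd z))\<^sup>2) \<partial>\<gamma>) \<le> ennreal C" "0 \<le> C"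
    and finite: "(\<integral>\<^sup>+ y. ennreal (g y) \<partial>\<nu>) < \<infinity>" "(\<integral>\<^sup>+ y. ennreal (\<phi> y) \<partial>\<mu>) < \<infinity>"
  shows "ext_integral g \<nu> \<le> ereal (\<alpha> * C) + ext_integral \<phi> \<mu>"
proof -
  note sets_Gamma_WFR[OF \<gamma>, measurable_cong]
  define G where "G s z = ennreal ((cmod (fst z))\<^sup>2) * ennreal (s * g (theta (fst z)))"
    for s :: real and z :: "complex \<times> complex"
  define \<Phi> where "\<Phi> s z = ennreal ((cmod (snd z))\<^sup>2) * ennreal (s * \<phi> (theta (snd z)))"
    for s :: real and z :: "complex \<times> complex"
  define D where "D z = ennreal ((cmod (fst z - snd z))\<^sup>2)" for z :: "complex \<times> complex"
  have [measurable]: "G s \<in> borel_measurable \<gamma>" "\<Phi> s \<in> borel_measurable \<gamma>" "D \<in> borel_measurable \<gamma>" for s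
    unfolding G_def \<Phi>_def D_def by measurable
  have G: "(\<integral>\<^sup>+ z. G s z \<partial>\<gamma>) = (\<integral>\<^sup>+ y. ennreal (s * g y) \<partial>\<nu>)" for s
    unfolding G_def using \<gamma> sets(1) by (intro nn_integral_fst_marginal[symmetric]) measurable
  have \<Phi>: "(\<integral>\<^sup>+ z. \<Phi> s z \<partial>\<gamma>) = (\<integral>\<^sup>+ y. ennreal (s * \<phi> y) \<partial>\<mu>)" for s
    unfolding \<Phi>_def using \<gamma> sets(2) by (intro nn_integral_snd_marginal[symmetric]) measurable
  have "(\<integral>\<^sup>+ z. G 1 z + \<Phi> (-1) z \<partial>\<gamma>) \<le> (\<integral>\<^sup>+ z. ennreal \<alpha> * D z + \<Phi> 1 z + G (-1) z \<partial>\<gamma>)"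
  proof (rule nn_integral_mono)
    fix z
    show "G 1 z + \<Phi> (-1) z \<le> ennreal \<alpha> * D z + \<Phi> 1 z + G (-1) z"
      unfolding G_def \<Phi>_def D_def mult_1 mult_minus1
      using pointwise[of "fst z" "snd z"] \<alpha> by (intro ennreal_split_le) auto
  qed
  also have "\<dots> = ennreal \<alpha> * (\<integral>\<^sup>+ z. D z \<partial>\<gamma>) + (\<integral>\<^sup>+ z. \<Phi> 1 z \<partial>\<gamma>) + (\<integral>\<^sup>+ z. G (-1) z \<partial>\<gamma>)"
    by (simp add: nn_integral_add nn_integral_cmult)
  finally have "(\<integral>\<^sup>+ z. G 1 z \<partial>\<gamma>) + (\<integral>\<^sup>+ z. \<Phi> (-1) z \<partial>\<gamma>)
      \<le> ennreal \<alpha> * (\<integral>\<^sup>+ z. D z \<partial>\<gamma>) + (\<integral>\<^sup>+ z. \<Phi> 1 z \<partial>\<gamma>) + (\<integral>\<^sup>+ z. G (-1) z \<partial>\<gamma>)"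
    by (simp add: nn_integral_add)
  then show ?thesis
    unfolding ext_integral_def G \<Phi> D_def using finite cost \<alpha> by (intro enn2ereal_diff_le) auto
qed

lemma exists_borel_interpolant:
  fixes x :: "nat \<Rightarrow> complex" and T :: "nat \<Rightarrow> real"
  assumes "inj_on x {..<N}"
  shows "\<exists>\<phi>\<in>borel_measurable borel. (\<forall>j<N. \<phi> (x j) = T j) \<and> (\<forall>y. y \<notin> x ` {..<N} \<longrightarrow> \<phi> y = c)"
proof -
  define \<phi> where "\<phi> y = c + (\<Sum>j<N. (T j - c) * indicator {x j} y)" for y
  have "\<phi> \<in> borel_measurable borel"
    unfolding \<phi>_def by measurable
  moreover have "\<phi> (x j) = T j" if "j < N" for j
  proof -
    have "(\<Sum>i<N. (T i - c) * indicator {x i} (x j)) = (\<Sum>i<N. if i = j then T j - c else 0)"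
      using assms that by (intro sum.cong) (auto simp: indicator_def inj_on_def)
    then show ?thesis
      using that by (simp add: \<phi>_def)
  qed
  moreover have "\<phi> y = c" if "y \<notin> x ` {..<N}" for y
    using that by (auto simp: \<phi>_def indicator_def intro!: sum.neutral)
  ultimately show ?thesis
    by blast
qed

lemma common_convergent_subseq:
  fixes s :: "nat \<Rightarrow> nat \<Rightarrow> 'a::metric_space"
  assumes "\<And>j. j < N \<Longrightarrow> compact (K j)" and "\<And>n j. j < N \<Longrightarrow> s n j \<in> K j"
  shows "\<exists>rr l. strict_mono rr \<and> (\<forall>j<N. l j \<in> K j \<and> (\<lambda>n. s (rr n) j) \<longlonglongrightarrow> l j)"
  using assms
proof (induction N)
  case 0
  show ?case
    by (rule exI[of _ id]) (auto simp: strict_mono_def)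
next
  case (Suc N)
  then obtain rr l where rr: "strict_mono rr" and l: "\<forall>j<N. l j \<in> K j \<and> (\<lambda>n. s (rr n) j) \<longlonglongrightarrow> l j"
    by (metis less_SucI)
  have "\<forall>n. s (rr n) N \<in> K N"
    using Suc.prems by simp
  then obtain a rr' where a: "a \<in> K N" "strict_mono rr'" "((\<lambda>n. s (rr n) N) \<circ> rr') \<longlonglongrightarrow> a"
    using compact_imp_seq_compact[OF Suc.prems(1)] seq_compactE by (metis lessI)
  have "\<forall>j<Suc N. (l(N := a)) j \<in> K j \<and> (\<lambda>n. s ((rr \<circ> rr') n) j) \<longlonglongrightarrow> (l(N := a)) j"
  proof (intro allI impI)
    fix j assume "j < Suc N"
    show "(l(N := a)) j \<in> K j \<and> (\<lambda>n. s ((rr \<circ> rr') n) j) \<longlonglongrightarrow> (l(N := a)) j"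
    proof (cases "j = N")
      case False
      then have "j < N"
        using \<open>j < Suc N\<close> by simp
      with l LIMSEQ_subseq_LIMSEQ[OF _ a(2), of "\<lambda>n. s (rr n) j"] False show ?thesis
        by (simp add: o_def)
    qed (use a in \<open>simp add: o_def\<close>)
  qed
  moreover have "strict_mono (rr \<circ> rr')"
    using rr a(2) by (simp add: strict_mono_def)
  ultimately show ?case
    by blast
qed

lemma discrete_ivt:
  fixes g :: "nat \<Rightarrow> real"
  assumes "g 0 \<le> c" "c \<le> g n"
  shows "\<exists>k\<le>n. g k \<le> c \<and> c \<le> g (min (Suc k) n)"
  using assms(2)
proof (induction n)
  case 0
  then show ?case
    using assms(1) by auto
next
  case (Suc n)
  show ?case
  proof (cases "c \<le> g n")
    case True
    then obtain k where "k \<le> n" "g k \<le> c" "c \<le> g (min (Suc k) n)"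
      using Suc.IH by blast
    then show ?thesis
      using Suc.prems by (intro exI[of _ k]) (cases "k = n"; auto simp: min_def)
  next
    case False
    then show ?thesis
      using Suc.prems by (intro exI[of _ n]) auto
  qed
qed

definition switch_prefix :: "nat \<Rightarrow> (nat \<Rightarrow> 'a) \<Rightarrow> (nat \<Rightarrow> 'a) \<Rightarrow> nat \<Rightarrow> 'a" where
  "switch_prefix k a b j = (if j < k then a j else b j)"

lemma sum_split_atom:
  fixes r a :: "nat \<Rightarrow> real"
  assumes "k < N \<or> w = 0"
  shows "(\<Sum>j<N. (r j - (if j = k then w * r k else 0)) * a j) + w * r k * b
           = (\<Sum>j<N. r j * a j) + w * r k * (b - a k)"
proof -
  have "(\<Sum>j<N. (r j - (if j = k then w * r k else 0)) * a j)
      = (\<Sum>j<N. r j * a j - (if j = k then w * r k * a k else 0))"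
    by (intro sum.cong) (auto simp: left_diff_distrib)
  also have "\<dots> = (\<Sum>j<N. r j * a j) - w * r k * a k"
    using assms by (auto simp: sum_subtractf)
  finally show ?thesis
    by (simp add: algebra_simps)
qed

section \<open>The problem with a finitely supported reference measure\<close>

locale atomic_target =
  fixes f :: "complex \<Rightarrow> real" and lam :: real and \<mu>1 :: "complex measure"
    and N :: nat and r :: "nat \<Rightarrow> real" and x :: "nat \<Rightarrow> complex"
  assumes usc: "usc_on_S1 f"
    and lam: "lam \<ge> 0"
    and mu1: "\<mu>1 \<in> Mplus_S1"
    and atoms_on: "\<forall>j<N. x j \<in> S1"
    and atoms_distinct: "inj_on x {..<N}"
    and weights_pos: "\<forall>j<N. r j > 0"
    and mu1_eq: "\<forall>A \<in> sets \<mu>1. emeasure \<mu>1 A = (\<Sum>j<N. ennreal (r j) * indicator A (x j))"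
begin

lemma sets_mu1: "sets \<mu>1 = sets (restrict_space borel S1)"
  using mu1 by (simp add: Mplus_S1_def)

lemma mu1_finite_atomic: "\<mu>1 = finite_atomic N r x"
proof (rule measure_eqI)
  fix A assume "A \<in> sets \<mu>1"
  then show "emeasure \<mu>1 A = emeasure (finite_atomic N r x) A"
    using mu1_eq atoms_on by (simp add: sets_mu1 emeasure_finite_atomic)
qed (simp add: sets_mu1)

lemma weights_nonneg: "\<forall>j<N. 0 \<le> r j"
  using weights_pos by (simp add: less_imp_le)

lemma f_measurable [measurable]: "f \<in> borel_measurable (restrict_space borel S1)"
  using usc by (rule usc_on_S1_measurable)

definition f_argmax :: complex where
  "f_argmax = (SOME t. t \<in> S1 \<and> (\<forall>y\<in>S1. f y \<le> f t))"

definition f_bound :: real where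
  "f_bound = max (f f_argmax) 0"

lemma f_argmax: "f_argmax \<in> S1" "\<And>y. y \<in> S1 \<Longrightarrow> f y \<le> f f_argmax"
proof -
  have "\<exists>t. t \<in> S1 \<and> (\<forall>y\<in>S1. f y \<le> f t)"
    using usc_on_S1_attains_max[OF usc] by blast
  from someI_ex[OF this] show "f_argmax \<in> S1" "\<And>y. y \<in> S1 \<Longrightarrow> f y \<le> f f_argmax"
    unfolding f_argmax_def by auto
qed

lemma f_bound_nonneg: "0 \<le> f_bound"
  by (simp add: f_bound_def)

lemma f_le_f_bound: "y \<in> S1 \<Longrightarrow> f y \<le> f_bound"
  using f_argmax(2)[of y] by (simp add: f_bound_def)

definition sparse_attainable :: "real \<Rightarrow> bool" where
  "sparse_attainable V \<longleftrightarrow>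
     (\<exists>\<mu>0\<in>WFR_ball lam \<mu>1. ext_integral f \<mu>0 = ereal V \<and> has_at_most_atoms (N + 2) \<mu>0)"

definition upper_value :: "real \<Rightarrow> bool" where
  "upper_value V \<longleftrightarrow> (\<forall>\<nu>\<in>WFR_ball lam \<mu>1. ext_integral f \<nu> \<le> ereal V)"

lemma discrete_plan:
  fixes p q :: "nat \<Rightarrow> complex"
  assumes margin: "\<And>A. (\<Sum>k<K. (cmod (q k))\<^sup>2 * indicator A (theta (q k))) = (\<Sum>j<N. r j * indicator A (x j))"
    and cost: "(\<Sum>k<K. (cmod (p k - q k))\<^sup>2) \<le> lam\<^sup>2"
  shows "\<exists>\<mu>0\<in>WFR_ball lam \<mu>1. ext_integral f \<mu>0 = ereal (\<Sum>k<K. (cmod (p k))\<^sup>2 * f (theta (p k)))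
           \<and> has_at_most_atoms K \<mu>0"
proof (intro bexI conjI)
  let ?\<mu>0 = "finite_atomic K (\<lambda>k. (cmod (p k))\<^sup>2) (\<lambda>k. theta (p k))"
  have "(\<Sum>j<N. ennreal (r j) * indicator A (x j)) = (\<Sum>k<K. ennreal ((cmod (q k))\<^sup>2) * indicator A (theta (q k)))" for A
  proof -
    have "(\<Sum>j<N. ennreal (r j) * indicator A (x j)) = ennreal (\<Sum>j<N. r j * indicator A (x j))"
      using weights_nonneg by (intro sum_ennreal_indicator) auto
    also have "\<dots> = ennreal (\<Sum>k<K. (cmod (q k))\<^sup>2 * indicator A (theta (q k)))"
      by (simp only: margin)
    also have "\<dots> = (\<Sum>k<K. ennreal ((cmod (q k))\<^sup>2) * indicator A (theta (q k)))"
      by (intro sum_ennreal_indicator[symmetric]) auto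
    finally show ?thesis .
  qed
  then have "WFR ?\<mu>0 \<mu>1 \<le> ennreal (sqrt (\<Sum>k<K. (cmod (p k - q k))\<^sup>2))"
    using mu1_eq by (intro WFR_discrete_plan_le sets_mu1) simp
  also have "\<dots> \<le> ennreal lam"
    using cost lam by (intro ennreal_leI real_le_lsqrt) auto
  finally show "?\<mu>0 \<in> WFR_ball lam \<mu>1"
    by (simp add: WFR_ball_def finite_atomic_in_Mplus_S1)
  show "ext_integral f ?\<mu>0 = ereal (\<Sum>k<K. (cmod (p k))\<^sup>2 * f (theta (p k)))"
    by (simp add: ext_integral_finite_atomic)
  show "has_at_most_atoms K ?\<mu>0"
    by (simp add: has_at_most_atoms_finite_atomic)
qed

definition admissible_config :: "(nat \<Rightarrow> complex) \<Rightarrow> (nat \<Rightarrow> real) \<Rightarrow> bool" where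
  "admissible_config t \<rho> \<longleftrightarrow> (\<forall>j<N. t j \<in> S1 \<and> 0 \<le> \<rho> j)"

definition config_cost :: "(nat \<Rightarrow> complex) \<Rightarrow> (nat \<Rightarrow> real) \<Rightarrow> real" where
  "config_cost t \<rho> = (\<Sum>j<N. r j * atom_cost (x j) (t j) (\<rho> j))"

lemma config_cost_nonneg: "0 \<le> config_cost t \<rho>"
  using weights_nonneg by (auto simp: config_cost_def intro!: sum_nonneg mult_nonneg_nonneg atom_cost_nonneg)

definition config_value :: "(nat \<Rightarrow> complex) \<Rightarrow> (nat \<Rightarrow> real) \<Rightarrow> real" where
  "config_value t \<rho> = (\<Sum>j<N. r j * ((\<rho> j)\<^sup>2 * f (t j)))"

text \<open>The atom \<open>c i \<delta>\<^sub>y\<^sub>i\<close> of \<open>\<mu>1\<close> is sent to \<open>c i (\<sigma> i)\<^sup>2 \<delta>\<^sub>s\<^sub>i\<close>, and the mass \<open>m\<close> is created at \<open>tc\<close>.\<close>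

lemma transport_plan:
  assumes atoms: "\<And>i. i < K \<Longrightarrow> 0 \<le> c i \<and> (c i = 0 \<or> (y i \<in> S1 \<and> s i \<in> S1 \<and> 0 \<le> \<sigma> i))"
    and m: "0 \<le> m" "tc \<in> S1"
    and margin: "\<And>A. (\<Sum>i<K. c i * indicator A (y i)) = (\<Sum>j<N. r j * indicator A (x j))"
    and cost: "(\<Sum>i<K. c i * atom_cost (y i) (s i) (\<sigma> i)) + m \<le> lam\<^sup>2"
  shows "\<exists>\<mu>0\<in>WFR_ball lam \<mu>1. ext_integral f \<mu>0 = ereal ((\<Sum>i<K. c i * ((\<sigma> i)\<^sup>2 * f (s i))) + m * f tc)
           \<and> has_at_most_atoms (Suc K) \<mu>0"
proof -
  define p where "p i = (if i < K then complex_of_real (sqrt (c i) * \<sigma> i) * s i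
      else complex_of_real (sqrt m) * tc)" for i
  define q where "q i = (if i < K then complex_of_real (sqrt (c i)) * y i else 0)" for i
  have "(\<Sum>i<Suc K. (cmod (q i))\<^sup>2 * indicator A (theta (q i))) = (\<Sum>j<N. r j * indicator A (x j))" for A
  proof -
    have "(cmod (q i))\<^sup>2 * indicator A (theta (q i)) = c i * indicator A (y i)" if "i < K" for i
      using that atoms[OF that] scaled_atom(1)[where c = "c i" and y = "y i" and s = "s i" and \<sigma> = "\<sigma> i"]
      by (simp add: q_def)
    then show ?thesis
      using margin[of A] by (simp add: q_def)
  qed
  moreover have "(\<Sum>i<Suc K. (cmod (p i - q i))\<^sup>2) \<le> lam\<^sup>2"
  proof -
    have "(cmod (p i - q i))\<^sup>2 = c i * atom_cost (y i) (s i) (\<sigma> i)" if "i < K" for i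
      using that atoms[OF that] scaled_atom(3)[where c = "c i" and y = "y i" and s = "s i" and \<sigma> = "\<sigma> i"]
      by (simp add: p_def q_def)
    then show ?thesis
      using cost m by (simp add: p_def q_def norm_mult)
  qed
  ultimately obtain \<mu>0 where "\<mu>0 \<in> WFR_ball lam \<mu>1" "has_at_most_atoms (Suc K) \<mu>0"
    "ext_integral f \<mu>0 = ereal (\<Sum>i<Suc K. (cmod (p i))\<^sup>2 * f (theta (p i)))"
    using discrete_plan by blast
  moreover have "(\<Sum>i<Suc K. (cmod (p i))\<^sup>2 * f (theta (p i))) = (\<Sum>i<K. c i * ((\<sigma> i)\<^sup>2 * f (s i))) + m * f tc"
  proof -
    have "(cmod (p i))\<^sup>2 * f (theta (p i)) = c i * ((\<sigma> i)\<^sup>2 * f (s i))" if "i < K" for i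
      using that atoms[OF that] scaled_atom(2)[where c = "c i" and y = "y i" and s = "s i" and \<sigma> = "\<sigma> i"]
      by (simp add: p_def)
    then show ?thesis
      using m norm_sq_theta_scaled[of "sqrt m" tc f] by (simp add: p_def)
  qed
  ultimately show ?thesis
    by auto
qed

text \<open>The fraction \<open>v\<close> of the mass of \<open>\<mu>1\<close> is taken from the atoms \<open>u\<close> and placed on an extra atom
  at \<open>y\<close> sent to \<open>\<sigma>\<^sup>2 \<delta>\<^sub>s\<close>; together with the created mass this uses \<open>N + 2\<close> atoms.\<close>

lemma config_plan:
  assumes cfg: "admissible_config t \<rho>" and u: "\<forall>j<N. 0 \<le> u j"
    and v: "0 \<le> v" "v = 0 \<or> (y \<in> S1 \<and> s \<in> S1 \<and> 0 \<le> \<sigma>)"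
    and m: "0 \<le> m" "tc \<in> S1"
    and margin: "\<And>A. (\<Sum>j<N. u j * indicator A (x j)) + v * indicator A y = (\<Sum>j<N. r j * indicator A (x j))"
    and cost: "(\<Sum>j<N. u j * atom_cost (x j) (t j) (\<rho> j)) + v * atom_cost y s \<sigma> + m \<le> lam\<^sup>2"
  shows "sparse_attainable ((\<Sum>j<N. u j * ((\<rho> j)\<^sup>2 * f (t j))) + v * (\<sigma>\<^sup>2 * f s) + m * f tc)"
proof -
  define c where "c i = (if i < N then u i else v)" for i
  define ys where "ys i = (if i < N then x i else y)" for i
  define ss where "ss i = (if i < N then t i else s)" for i
  define \<sigma>s where "\<sigma>s i = (if i < N then \<rho> i else \<sigma>)" for i
  have sum_Suc: "(\<Sum>i<Suc N. c i * h (ys i) (ss i) (\<sigma>s i)) = (\<Sum>j<N. u j * h (x j) (t j) (\<rho> j)) + v * h y s \<sigma>"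
    for h :: "complex \<Rightarrow> complex \<Rightarrow> real \<Rightarrow> real"
    by (simp add: c_def ys_def ss_def \<sigma>s_def)
  have "\<exists>\<mu>0\<in>WFR_ball lam \<mu>1. ext_integral f \<mu>0 = ereal ((\<Sum>i<Suc N. c i * ((\<sigma>s i)\<^sup>2 * f (ss i))) + m * f tc)
      \<and> has_at_most_atoms (Suc (Suc N)) \<mu>0"
  proof (rule transport_plan[OF _ m])
    show "0 \<le> c i \<and> (c i = 0 \<or> (ys i \<in> S1 \<and> ss i \<in> S1 \<and> 0 \<le> \<sigma>s i))" if "i < Suc N" for i
      using that u v cfg atoms_on by (auto simp: c_def ys_def ss_def \<sigma>s_def admissible_config_def)
    show "(\<Sum>i<Suc N. c i * indicator A (ys i)) = (\<Sum>j<N. r j * indicator A (x j))" for A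
      using sum_Suc[of "\<lambda>y _ _. indicator A y"] margin[of A] by simp
    show "(\<Sum>i<Suc N. c i * atom_cost (ys i) (ss i) (\<sigma>s i)) + m \<le> lam\<^sup>2"
      using sum_Suc[of atom_cost] cost by simp
  qed
  then show ?thesis
    using sum_Suc[of "\<lambda>_ s \<sigma>. \<sigma>\<^sup>2 * f s"] by (simp add: sparse_attainable_def)
qed

section \<open>Weak duality\<close>

lemma dual_potential:
  assumes \<alpha>: "f_bound < \<alpha>"
    and T: "\<And>j t \<rho>. j < N \<Longrightarrow> t \<in> S1 \<Longrightarrow> 0 \<le> \<rho> \<Longrightarrow> lagrangian f \<alpha> (x j) t \<rho> \<le> T j"
  shows "\<exists>\<phi>\<in>borel_measurable (restrict_space borel S1). (\<forall>j<N. \<phi> (x j) = T j) \<and>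
           (\<forall>y\<in>S1. \<forall>t\<in>S1. \<forall>\<rho>\<ge>0. lagrangian f \<alpha> y t \<rho> \<le> \<phi> y)"
proof -
  have "0 < \<alpha>"
    using \<alpha> f_bound_nonneg by linarith
  obtain \<phi> where \<phi>: "\<phi> \<in> borel_measurable borel" and \<phi>_x: "\<forall>j<N. \<phi> (x j) = T j"
    and \<phi>_else: "\<forall>y. y \<notin> x ` {..<N} \<longrightarrow> \<phi> y = \<alpha>\<^sup>2 / (\<alpha> - f_bound)"
    using exists_borel_interpolant[OF atoms_distinct] by blast
  have "lagrangian f \<alpha> y t \<rho> \<le> \<phi> y" if "y \<in> S1" "t \<in> S1" "0 \<le> \<rho>" for y t \<rho>
  proof (cases "y \<in> x ` {..<N}")
    case True
    then show ?thesis
      using T \<phi>_x that by auto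
  next
    case False
    then show ?thesis
      using \<phi>_else lagrangian_le[of f_bound \<alpha> f y t \<rho>] \<alpha> \<open>0 < \<alpha>\<close> f_le_f_bound that by auto
  qed
  moreover have "\<phi> \<in> borel_measurable (restrict_space borel S1)"
    using \<phi> by (rule measurable_restrict_space1)
  ultimately show ?thesis
    using \<phi>_x by blast
qed

lemma nn_integral_f_less_top:
  assumes "\<nu> \<in> WFR_ball lam \<mu>1"
  shows "(\<integral>\<^sup>+ y. ennreal (f y) \<partial>\<nu>) < \<infinity>"
proof -
  have sets_\<nu>: "sets \<nu> = sets (restrict_space borel S1)" and "emeasure \<nu> S1 < \<infinity>"
    using assms by (auto simp: WFR_ball_def Mplus_S1_def)
  moreover have "space \<nu> = S1"
    using sets_eq_imp_space_eq[OF sets_\<nu>] by (simp add: space_restrict_space)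
  ultimately have "(\<integral>\<^sup>+ y. ennreal (f y) \<partial>\<nu>) \<le> (\<integral>\<^sup>+ y. ennreal f_bound \<partial>\<nu>)"
    using f_le_f_bound by (intro nn_integral_mono ennreal_leI) auto
  also have "\<dots> = ennreal f_bound * emeasure \<nu> S1"
    using \<open>space \<nu> = S1\<close> by simp
  also have "\<dots> < \<infinity>"
    using \<open>emeasure \<nu> S1 < \<infinity>\<close> by (simp add: ennreal_mult_less_top)
  finally show ?thesis .
qed

lemma ext_integral_le_near_optimal_plans:
  assumes \<nu>: "\<nu> \<in> WFR_ball lam \<mu>1" and "0 < \<alpha>"
    and plans: "\<And>\<gamma> C. \<gamma> \<in> Gamma_WFR \<nu> \<mu>1 \<Longrightarrow> lam\<^sup>2 < C \<Longrightarrow>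
      (\<integral>\<^sup>+ z. ennreal ((cmod (fst z - snd z))\<^sup>2) \<partial>\<gamma>) \<le> ennreal C \<Longrightarrow> X \<le> ereal (\<alpha> * C) + Y"
  shows "X \<le> ereal (\<alpha> * lam\<^sup>2) + Y"
proof (rule ereal_le_epsilon2)
  fix e :: real assume "0 < e"
  define C where "C = lam\<^sup>2 + e / \<alpha>"
  have "lam\<^sup>2 < C"
    using \<open>0 < e\<close> \<open>0 < \<alpha>\<close> by (simp add: C_def)
  then have "lam < sqrt C"
    using lam by (simp add: real_less_rsqrt)
  have "WFR \<nu> \<mu>1 \<le> ennreal lam"
    using \<nu> by (simp add: WFR_ball_def)
  also have "\<dots> < ennreal (sqrt C)"
    using \<open>lam < sqrt C\<close> lam by (intro ennreal_lessI) linarith+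
  finally obtain \<gamma> where "\<gamma> \<in> Gamma_WFR \<nu> \<mu>1"
    and "(\<integral>\<^sup>+ z. ennreal ((cmod (fst z - snd z))\<^sup>2) \<partial>\<gamma>) < ennreal ((sqrt C)\<^sup>2)"
    using Gamma_WFR_cost_less by blast
  with \<open>lam\<^sup>2 < C\<close> have "X \<le> ereal (\<alpha> * C) + Y"
    using zero_le_power2[of lam] by (intro plans) auto
  moreover have "\<alpha> * C = \<alpha> * lam\<^sup>2 + e"
    using \<open>0 < \<alpha>\<close> by (simp add: C_def algebra_simps)
  ultimately show "X \<le> ereal (\<alpha> * lam\<^sup>2) + Y + ereal e"
    by (simp add: add_ac)
qed

lemma weak_duality:
  assumes \<alpha>: "f_bound < \<alpha>"
    and T: "\<And>j t \<rho>. j < N \<Longrightarrow> t \<in> S1 \<Longrightarrow> 0 \<le> \<rho> \<Longrightarrow> lagrangian f \<alpha> (x j) t \<rho> \<le> T j"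
    and \<nu>: "\<nu> \<in> WFR_ball lam \<mu>1"
  shows "ext_integral f \<nu> \<le> ereal (\<alpha> * lam\<^sup>2 + (\<Sum>j<N. r j * T j))"
proof -
  have "0 < \<alpha>"
    using \<alpha> f_bound_nonneg by linarith
  obtain \<phi> where \<phi> [measurable]: "\<phi> \<in> borel_measurable (restrict_space borel S1)"
    and \<phi>_x: "\<forall>j<N. \<phi> (x j) = T j" and \<phi>_bound: "\<forall>y\<in>S1. \<forall>t\<in>S1. \<forall>\<rho>\<ge>0. lagrangian f \<alpha> y t \<rho> \<le> \<phi> y"
    using dual_potential[OF \<alpha> T] by blast
  have pointwise: "(cmod p)\<^sup>2 * f (theta p) - \<alpha> * (cmod (p - q))\<^sup>2 \<le> (cmod q)\<^sup>2 * \<phi> (theta q)" for p q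
    using lagrangian_bound_scaled[of "cmod p" "cmod q" "theta p" f \<alpha> "theta q" "\<phi> (theta q)"]
      \<phi>_bound f_le_f_bound[of "theta p"] \<alpha> by (simp add: polar_decomposition)
  have sets_\<nu>: "sets \<nu> = sets (restrict_space borel S1)"
    using \<nu> by (simp add: WFR_ball_def Mplus_S1_def)
  have finite_\<phi>: "(\<integral>\<^sup>+ y. ennreal (\<phi> y) \<partial>\<mu>1) < \<infinity>"
    unfolding mu1_finite_atomic using atoms_on
    by (simp add: nn_integral_finite_atomic ennreal_mult_eq_top_iff less_top[symmetric])
  have "ext_integral \<phi> \<mu>1 = ereal (\<Sum>j<N. r j * \<phi> (x j))"
    unfolding mu1_finite_atomic using atoms_on weights_nonneg by (intro ext_integral_finite_atomic) auto
  also have "\<dots> = ereal (\<Sum>j<N. r j * T j)"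
    using \<phi>_x by simp
  finally have "ext_integral \<phi> \<mu>1 = ereal (\<Sum>j<N. r j * T j)" .
  moreover have "ext_integral f \<nu> \<le> ereal (\<alpha> * lam\<^sup>2) + ext_integral \<phi> \<mu>1"
  proof (rule ext_integral_le_near_optimal_plans[OF \<nu> \<open>0 < \<alpha>\<close>])
    fix \<gamma> C
    assume "\<gamma> \<in> Gamma_WFR \<nu> \<mu>1" "lam\<^sup>2 < C" "(\<integral>\<^sup>+ z. ennreal ((cmod (fst z - snd z))\<^sup>2) \<partial>\<gamma>) \<le> ennreal C"
    moreover from \<open>lam\<^sup>2 < C\<close> have "0 \<le> C"
      using zero_le_power2[of lam] by linarith
    ultimately show "ext_integral f \<nu> \<le> ereal (\<alpha> * C) + ext_integral \<phi> \<mu>1"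
      using \<open>0 < \<alpha>\<close> nn_integral_f_less_top[OF \<nu>] finite_\<phi>
      by (intro ext_integral_le_plan[OF _ sets_\<nu> sets_mu1 f_measurable \<phi> pointwise]) auto
  qed
  ultimately show ?thesis
    by simp
qed

lemma config_value_eq:
  "config_value t \<rho> = (\<Sum>j<N. r j * lagrangian f \<alpha> (x j) (t j) (\<rho> j)) + \<alpha> * config_cost t \<rho>"
  unfolding config_value_def config_cost_def by (rule sum_gain_eq)

definition optimal_atom :: "real \<Rightarrow> nat \<Rightarrow> complex \<Rightarrow> real \<Rightarrow> bool" where
  "optimal_atom \<alpha> j t \<rho> \<longleftrightarrow> t \<in> S1 \<and> 0 \<le> \<rho> \<and>
     (\<forall>t'\<in>S1. \<forall>\<rho>'\<ge>0. lagrangian f \<alpha> (x j) t' \<rho>' \<le> lagrangian f \<alpha> (x j) t \<rho>)"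

definition optimal_config :: "real \<Rightarrow> (nat \<Rightarrow> complex) \<Rightarrow> (nat \<Rightarrow> real) \<Rightarrow> bool" where
  "optimal_config \<alpha> t \<rho> \<longleftrightarrow> (\<forall>j<N. optimal_atom \<alpha> j (t j) (\<rho> j))"

lemma optimal_config_admissible: "optimal_config \<alpha> t \<rho> \<Longrightarrow> admissible_config t \<rho>"
  by (simp add: optimal_config_def optimal_atom_def admissible_config_def)

lemma lagrangian_optimal_eq:
  "optimal_atom \<alpha> j t \<rho> \<Longrightarrow> optimal_atom \<alpha> j t' \<rho>' \<Longrightarrow>
    lagrangian f \<alpha> (x j) t \<rho> = lagrangian f \<alpha> (x j) t' \<rho>'"
  unfolding optimal_atom_def by (meson order_antisym)

lemma upper_value_optimal_config:
  assumes "f_bound < \<alpha>" "optimal_config \<alpha> t \<rho>"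
  shows "upper_value (config_value t \<rho> + \<alpha> * (lam\<^sup>2 - config_cost t \<rho>))"
  unfolding upper_value_def
proof
  fix \<nu> assume "\<nu> \<in> WFR_ball lam \<mu>1"
  then have "ext_integral f \<nu> \<le> ereal (\<alpha> * lam\<^sup>2 + (\<Sum>j<N. r j * lagrangian f \<alpha> (x j) (t j) (\<rho> j)))"
    using assms by (intro weak_duality) (auto simp: optimal_config_def optimal_atom_def)
  then show "ext_integral f \<nu> \<le> ereal (config_value t \<rho> + \<alpha> * (lam\<^sup>2 - config_cost t \<rho>))"
    by (simp add: config_value_eq[of _ _ \<alpha>] algebra_simps)
qed

lemma optimal_atom_exists:
  assumes \<alpha>: "f_bound < \<alpha>" and j: "j < N"
  shows "\<exists>t \<rho>. optimal_atom \<alpha> j t \<rho>"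
proof -
  define R where "R = 2 * \<alpha> / (\<alpha> - f_bound)"
  have "0 < \<alpha>"
    using \<alpha> f_bound_nonneg by linarith
  then have "0 \<le> R"
    using \<alpha> by (simp add: R_def)
  have xj: "x j \<in> S1"
    using atoms_on j by simp
  obtain t \<rho> where t: "t \<in> S1" "\<rho> \<in> {0..R}"
    and max: "\<forall>t'\<in>S1. \<forall>\<rho>'\<in>{0..R}. lagrangian f \<alpha> (x j) t' \<rho>' \<le> lagrangian f \<alpha> (x j) t \<rho>"
    using lagrangian_attains_max[OF usc \<open>0 \<le> R\<close>] by blast
  have "- \<alpha> \<le> lagrangian f \<alpha> (x j) t \<rho>"
    using max xj \<open>0 \<le> R\<close> by (force simp: lagrangian_zero)
  have "optimal_atom \<alpha> j t \<rho>"
    unfolding optimal_atom_def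
  proof (intro conjI ballI allI impI)
    show "t \<in> S1" "0 \<le> \<rho>"
      using t by auto
    fix t' and \<rho>' :: real assume t': "t' \<in> S1" and "0 \<le> \<rho>'"
    show "lagrangian f \<alpha> (x j) t' \<rho>' \<le> lagrangian f \<alpha> (x j) t \<rho>"
    proof (cases "\<rho>' \<le> R")
      case True
      then show ?thesis
        using max t' \<open>0 \<le> \<rho>'\<close> by simp
    next
      case False
      then have "lagrangian f \<alpha> (x j) t' \<rho>' < - \<alpha>"
        using lagrangian_less_neg[of f_bound \<alpha> f "x j" t' \<rho>'] \<alpha> \<open>0 < \<alpha>\<close> f_le_f_bound xj t'
        by (simp add: R_def)
      then show ?thesis
        using \<open>- \<alpha> \<le> lagrangian f \<alpha> (x j) t \<rho>\<close> by simp
    qed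
  qed
  then show ?thesis
    by blast
qed

lemma optimal_config_exists:
  assumes "f_bound < \<alpha>"
  shows "\<exists>t \<rho>. optimal_config \<alpha> t \<rho>"
proof -
  have "\<forall>j. \<exists>p. j < N \<longrightarrow> optimal_atom \<alpha> j (fst p) (snd p)"
    using optimal_atom_exists[OF assms] by simp
  then obtain p where "\<forall>j. j < N \<longrightarrow> optimal_atom \<alpha> j (fst (p j)) (snd (p j))"
    by metis
  then show ?thesis
    unfolding optimal_config_def by (intro exI[of _ "\<lambda>j. fst (p j)"] exI[of _ "\<lambda>j. snd (p j)"]) simp
qed

lemma optimal_configs_exist:
  assumes "\<And>n. f_bound < \<alpha>s n"
  shows "\<exists>ts \<rho>s. \<forall>n. optimal_config (\<alpha>s n) (ts n) (\<rho>s n)"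
  using optimal_config_exists[OF assms] by metis

lemma optimal_atom_rho_le:
  assumes "f_bound < \<beta>" "\<beta> \<le> \<alpha>" "j < N" "optimal_atom \<alpha> j t \<rho>"
  shows "\<rho> \<le> 2 + 2 * f_bound / (\<beta> - f_bound)"
proof -
  have xj: "x j \<in> S1" and t: "t \<in> S1"
    using assms atoms_on by (auto simp: optimal_atom_def)
  have "0 < \<alpha>" "f_bound < \<alpha>"
    using assms f_bound_nonneg by linarith+
  have "\<rho> \<le> 2 * \<alpha> / (\<alpha> - f_bound)"
  proof (rule ccontr)
    assume "\<not> ?thesis"
    then have "lagrangian f \<alpha> (x j) t \<rho> < - \<alpha>"
      using lagrangian_less_neg[of f_bound \<alpha> f "x j" t \<rho>] \<open>0 < \<alpha>\<close> \<open>f_bound < \<alpha>\<close> f_le_f_bound xj t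
      by simp
    moreover have "lagrangian f \<alpha> (x j) (x j) 0 \<le> lagrangian f \<alpha> (x j) t \<rho>"
      using assms(4) xj by (simp add: optimal_atom_def)
    ultimately show False
      using xj by (simp add: lagrangian_zero)
  qed
  also have "2 * \<alpha> / (\<alpha> - f_bound) = 2 + 2 * f_bound / (\<alpha> - f_bound)"
    using \<open>f_bound < \<alpha>\<close> by (simp add: field_simps)
  also have "\<dots> \<le> 2 + 2 * f_bound / (\<beta> - f_bound)"
    using assms(1,2) f_bound_nonneg by (simp add: divide_left_mono)
  finally show ?thesis .
qed

lemma optimal_atom_cost_le:
  assumes "j < N" "optimal_atom \<alpha> j t \<rho>"
  shows "(\<alpha> - 2 * f_bound) * atom_cost (x j) t \<rho> \<le> 2 * f_bound - f (x j)"
proof -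
  have xj: "x j \<in> S1" and t: "t \<in> S1" "0 \<le> \<rho>"
    using assms atoms_on by (auto simp: optimal_atom_def)
  have "lagrangian f \<alpha> (x j) (x j) 1 \<le> lagrangian f \<alpha> (x j) t \<rho>"
    using assms(2) xj by (simp add: optimal_atom_def)
  then have "f (x j) \<le> lagrangian f \<alpha> (x j) t \<rho>"
    by (simp add: lagrangian_self)
  moreover have "\<rho>\<^sup>2 * f t \<le> \<rho>\<^sup>2 * f_bound"
    using f_le_f_bound t by (simp add: mult_left_mono)
  moreover have "\<rho>\<^sup>2 \<le> 2 * atom_cost (x j) t \<rho> + 2"
  proof -
    have "\<rho>\<^sup>2 \<le> 2 * (\<rho> - 1)\<^sup>2 + 2"
      using zero_le_power2[of "\<rho> - 2"] by (simp add: power2_eq_square algebra_simps)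
    then show ?thesis
      using atom_cost_ge[OF xj t] by linarith
  qed
  then have "\<rho>\<^sup>2 * f_bound \<le> (2 * atom_cost (x j) t \<rho> + 2) * f_bound"
    using f_bound_nonneg by (rule mult_right_mono)
  ultimately show ?thesis
    by (simp add: lagrangian_def algebra_simps)
qed

lemma optimal_config_cost_le:
  assumes "optimal_config \<alpha> t \<rho>"
  shows "(\<alpha> - 2 * f_bound) * config_cost t \<rho> \<le> (\<Sum>j<N. r j * \<bar>2 * f_bound - f (x j)\<bar>)"
proof -
  have "(\<alpha> - 2 * f_bound) * config_cost t \<rho> = (\<Sum>j<N. r j * ((\<alpha> - 2 * f_bound) * atom_cost (x j) (t j) (\<rho> j)))"
    by (simp add: config_cost_def sum_distrib_left algebra_simps)
  also have "\<dots> \<le> (\<Sum>j<N. r j * \<bar>2 * f_bound - f (x j)\<bar>)"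
  proof (intro sum_mono mult_left_mono)
    fix j assume "j \<in> {..<N}"
    then show "(\<alpha> - 2 * f_bound) * atom_cost (x j) (t j) (\<rho> j) \<le> \<bar>2 * f_bound - f (x j)\<bar>"
      using optimal_atom_cost_le[of j \<alpha> "t j" "\<rho> j"] assms by (force simp: optimal_config_def)
    show "0 \<le> r j"
      using weights_nonneg \<open>j \<in> {..<N}\<close> by simp
  qed
  finally show ?thesis .
qed

lemma optimal_atom_limit:
  assumes \<alpha>: "\<alpha>s \<longlonglongrightarrow> \<alpha>" and opt: "\<forall>n. optimal_atom (\<alpha>s n) j (ts n) (\<rho>s n)"
    and t: "ts \<longlonglongrightarrow> t" and \<rho>: "\<rho>s \<longlonglongrightarrow> \<rho>"
  shows "optimal_atom \<alpha> j t \<rho>"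
proof -
  have ts: "\<forall>n. ts n \<in> S1" and "\<forall>n. 0 \<le> \<rho>s n"
    using opt by (auto simp: optimal_atom_def)
  have "t \<in> S1"
    by (rule closed_sequentially[of S1 ts t]) (use ts t in auto)
  moreover have "0 \<le> \<rho>"
    using \<rho> \<open>\<forall>n. 0 \<le> \<rho>s n\<close> by (intro LIMSEQ_le_const) auto
  moreover have "lagrangian f \<alpha> (x j) t' \<rho>' \<le> lagrangian f \<alpha> (x j) t \<rho>" if t': "t' \<in> S1" "0 \<le> \<rho>'" for t' \<rho>'
  proof (rule field_le_epsilon)
    fix e :: real assume "0 < e"
    have le_n: "lagrangian f (\<alpha>s n) (x j) t' \<rho>' \<le> lagrangian f (\<alpha>s n) (x j) (ts n) (\<rho>s n)" for n
      using opt t' by (simp add: optimal_atom_def)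
    have "eventually (\<lambda>n. lagrangian f (\<alpha>s n) (x j) (ts n) (\<rho>s n) < lagrangian f \<alpha> (x j) t \<rho> + e) sequentially"
      using lagrangian_usc[OF usc \<alpha> t ts \<open>t \<in> S1\<close> \<rho> \<open>0 < e\<close>] .
    then have ev: "eventually (\<lambda>n. lagrangian f (\<alpha>s n) (x j) t' \<rho>' \<le> lagrangian f \<alpha> (x j) t \<rho> + e) sequentially"
      by eventually_elim (rule order_trans[OF le_n less_imp_le])
    have "(\<lambda>n. lagrangian f (\<alpha>s n) (x j) t' \<rho>') \<longlonglongrightarrow> lagrangian f \<alpha> (x j) t' \<rho>'"
      unfolding lagrangian_def using \<alpha> by (intro tendsto_intros)
    from tendsto_upperbound[OF this ev] show "lagrangian f \<alpha> (x j) t' \<rho>' \<le> lagrangian f \<alpha> (x j) t \<rho> + e"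
      by simp
  qed
  ultimately show ?thesis
    by (simp add: optimal_atom_def)
qed

definition configs_tendsto ::
    "(nat \<Rightarrow> nat \<Rightarrow> complex) \<Rightarrow> (nat \<Rightarrow> nat \<Rightarrow> real) \<Rightarrow> (nat \<Rightarrow> complex) \<Rightarrow> (nat \<Rightarrow> real) \<Rightarrow> bool" where
  "configs_tendsto ts \<rho>s t \<rho> \<longleftrightarrow> (\<forall>j<N. (\<lambda>n. ts n j) \<longlonglongrightarrow> t j \<and> (\<lambda>n. \<rho>s n j) \<longlonglongrightarrow> \<rho> j)"

lemma config_convergent_subseq:
  fixes ts :: "nat \<Rightarrow> nat \<Rightarrow> complex" and \<rho>s :: "nat \<Rightarrow> nat \<Rightarrow> real"
  assumes "\<And>n. admissible_config (ts n) (\<rho>s n)" and "\<And>n j. j < N \<Longrightarrow> \<rho>s n j \<le> B j"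
  shows "\<exists>rr t \<rho>. strict_mono rr \<and> admissible_config t \<rho> \<and>
           configs_tendsto (\<lambda>n. ts (rr n)) (\<lambda>n. \<rho>s (rr n)) t \<rho>"
proof -
  have "\<exists>rr l. strict_mono rr \<and>
      (\<forall>j<N. l j \<in> S1 \<times> {0..B j} \<and> (\<lambda>n. (ts (rr n) j, \<rho>s (rr n) j)) \<longlonglongrightarrow> l j)"
    using assms
    by (intro common_convergent_subseq[of N "\<lambda>j. S1 \<times> {0..B j}" "\<lambda>n j. (ts n j, \<rho>s n j)"])
      (auto intro!: compact_Times simp: admissible_config_def)
  then obtain rr l where "strict_mono rr"
    and l: "\<forall>j<N. l j \<in> S1 \<times> {0..B j} \<and> (\<lambda>n. (ts (rr n) j, \<rho>s (rr n) j)) \<longlonglongrightarrow> l j"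
    by blast
  moreover have "admissible_config (\<lambda>j. fst (l j)) (\<lambda>j. snd (l j))"
    using l by (auto simp: admissible_config_def mem_Times_iff)
  moreover have "configs_tendsto (\<lambda>n. ts (rr n)) (\<lambda>n. \<rho>s (rr n)) (\<lambda>j. fst (l j)) (\<lambda>j. snd (l j))"
    using l tendsto_fst tendsto_snd by (fastforce simp: configs_tendsto_def)
  ultimately show ?thesis
    by blast
qed

lemma config_cost_tendsto:
  "configs_tendsto ts \<rho>s t \<rho> \<Longrightarrow> (\<lambda>n. config_cost (ts n) (\<rho>s n)) \<longlonglongrightarrow> config_cost t \<rho>"
  unfolding configs_tendsto_def config_cost_def atom_cost_def by (intro tendsto_sum tendsto_intros) auto

lemma config_value_usc:
  assumes lim: "configs_tendsto ts \<rho>s t \<rho>"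
    and adm: "\<And>n. admissible_config (ts n) (\<rho>s n)" "admissible_config t \<rho>" and "0 < e"
  shows "eventually (\<lambda>n. config_value (ts n) (\<rho>s n) < config_value t \<rho> + e) sequentially"
  unfolding config_value_def
proof (rule eventually_sum_less)
  fix j and e' :: real assume j: "j \<in> {..<N}" and "0 < e'"
  then have "0 < r j"
    using weights_pos by simp
  have "eventually (\<lambda>n. (\<rho>s n j)\<^sup>2 * f (ts n j) < (\<rho> j)\<^sup>2 * f (t j) + e' / r j) sequentially"
    using lim adm j \<open>0 < e'\<close> \<open>0 < r j\<close>
    by (intro usc_on_S1_scaled_sequentially[OF usc]) (auto simp: configs_tendsto_def admissible_config_def)
  then show "eventually (\<lambda>n. r j * ((\<rho>s n j)\<^sup>2 * f (ts n j)) < r j * ((\<rho> j)\<^sup>2 * f (t j)) + e') sequentially"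
  proof eventually_elim
    case (elim n)
    then have "r j * ((\<rho>s n j)\<^sup>2 * f (ts n j)) < r j * ((\<rho> j)\<^sup>2 * f (t j) + e' / r j)"
      using \<open>0 < r j\<close> by (intro mult_strict_left_mono)
    then show ?case
      using \<open>0 < r j\<close> by (simp add: distrib_left)
  qed
qed (use \<open>0 < e\<close> in auto)

text \<open>Weak duality along a convergent sequence of optimal configurations: only an upper bound on
  the \<open>limsup\<close> of the penalty term is needed, as the multipliers need not converge.\<close>

lemma upper_value_limit:
  assumes opt: "\<And>n. f_bound < \<alpha>s n" "\<And>n. optimal_config (\<alpha>s n) (ts n) (\<rho>s n)"
    and lim: "configs_tendsto ts \<rho>s t \<rho>" and adm: "admissible_config t \<rho>"
    and penalty: "\<And>e. 0 < e \<Longrightarrow> eventually (\<lambda>n. \<alpha>s n * (lam\<^sup>2 - config_cost (ts n) (\<rho>s n)) < B + e) sequentially"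
  shows "upper_value (config_value t \<rho> + B)"
  unfolding upper_value_def
proof
  fix \<nu> assume \<nu>: "\<nu> \<in> WFR_ball lam \<mu>1"
  show "ext_integral f \<nu> \<le> ereal (config_value t \<rho> + B)"
  proof (rule ereal_le_epsilon2)
    fix e :: real assume "0 < e"
    have "eventually (\<lambda>n. config_value (ts n) (\<rho>s n) < config_value t \<rho> + e / 2) sequentially"
      using opt(2) optimal_config_admissible \<open>0 < e\<close> by (intro config_value_usc[OF lim _ adm]) auto
    moreover have "eventually (\<lambda>n. \<alpha>s n * (lam\<^sup>2 - config_cost (ts n) (\<rho>s n)) < B + e / 2) sequentially"
      using \<open>0 < e\<close> by (intro penalty) simp
    ultimately have "eventually (\<lambda>n. config_value (ts n) (\<rho>s n) + \<alpha>s n * (lam\<^sup>2 - config_cost (ts n) (\<rho>s n))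
        < config_value t \<rho> + B + e) sequentially"
      by eventually_elim simp
    then obtain n where "config_value (ts n) (\<rho>s n) + \<alpha>s n * (lam\<^sup>2 - config_cost (ts n) (\<rho>s n))
        < config_value t \<rho> + B + e"
      using eventually_happens[of _ sequentially] by auto
    moreover have "ext_integral f \<nu> \<le> ereal (config_value (ts n) (\<rho>s n) + \<alpha>s n * (lam\<^sup>2 - config_cost (ts n) (\<rho>s n)))"
      using upper_value_optimal_config[OF opt] \<nu> by (simp add: upper_value_def)
    ultimately show "ext_integral f \<nu> \<le> ereal (config_value t \<rho> + B) + ereal e"
      by (simp add: order_trans)
  qed
qed

lemma optimal_configs_limit:
  assumes \<alpha>: "\<alpha>s \<longlonglongrightarrow> \<alpha>" "f_bound < \<alpha>" and opt: "\<forall>n. optimal_config (\<alpha>s n) (ts n) (\<rho>s n)"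
    and C: "closed C" "\<forall>n. config_cost (ts n) (\<rho>s n) \<in> C"
  shows "\<exists>t \<rho>. optimal_config \<alpha> t \<rho> \<and> config_cost t \<rho> \<in> C"
proof -
  define \<beta> where "\<beta> = (f_bound + \<alpha>) / 2"
  have "f_bound < \<beta>" "\<beta> < \<alpha>"
    using \<alpha>(2) by (simp_all add: \<beta>_def)
  then have "eventually (\<lambda>n. \<beta> < \<alpha>s n) sequentially"
    using order_tendstoD(1)[OF \<alpha>(1)] by blast
  then obtain n0 where n0: "\<forall>n\<ge>n0. \<beta> < \<alpha>s n"
    by (auto simp: eventually_sequentially)
  have "\<rho>s (n + n0) j \<le> 2 + 2 * f_bound / (\<beta> - f_bound)" if "j < N" for n j
  proof (rule optimal_atom_rho_le[OF \<open>f_bound < \<beta>\<close> _ that])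
    show "\<beta> \<le> \<alpha>s (n + n0)"
      using n0 by (simp add: less_imp_le)
    show "optimal_atom (\<alpha>s (n + n0)) j (ts (n + n0) j) (\<rho>s (n + n0) j)"
      using opt that by (simp add: optimal_config_def)
  qed
  moreover have adm: "admissible_config (ts n) (\<rho>s n)" for n
    using opt optimal_config_admissible by blast
  ultimately obtain rr t \<rho> where rr: "strict_mono rr"
    and lim: "configs_tendsto (\<lambda>n. ts (rr n + n0)) (\<lambda>n. \<rho>s (rr n + n0)) t \<rho>"
    using config_convergent_subseq[of "\<lambda>n. ts (n + n0)" "\<lambda>n. \<rho>s (n + n0)"
        "\<lambda>_. 2 + 2 * f_bound / (\<beta> - f_bound)"]
    by blast
  have "optimal_config \<alpha> t \<rho>"
    unfolding optimal_config_def
  proof (intro allI impI)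
    fix j assume "j < N"
    have "(\<lambda>n. \<alpha>s (rr n + n0)) \<longlonglongrightarrow> \<alpha>"
      using LIMSEQ_subseq_LIMSEQ[OF LIMSEQ_ignore_initial_segment[OF \<alpha>(1)] rr] by (simp add: o_def)
    then show "optimal_atom \<alpha> j (t j) (\<rho> j)"
      by (rule optimal_atom_limit) (use opt lim \<open>j < N\<close> in \<open>auto simp: optimal_config_def configs_tendsto_def\<close>)
  qed
  moreover have "config_cost t \<rho> \<in> C"
    using closed_sequentially[OF C(1) _ config_cost_tendsto[OF lim]] C(2) by blast
  ultimately show ?thesis
    by blast
qed

lemma admissible_rho_le_budget:
  assumes "admissible_config t \<rho>" "config_cost t \<rho> \<le> lam\<^sup>2" "j < N"
  shows "\<rho> j \<le> 1 + sqrt (lam\<^sup>2 / r j)"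
proof -
  have "r j * atom_cost (x j) (t j) (\<rho> j) \<le> config_cost t \<rho>"
    unfolding config_cost_def using assms(3) weights_nonneg
    by (intro member_le_sum) (auto intro!: mult_nonneg_nonneg atom_cost_nonneg)
  then have "atom_cost (x j) (t j) (\<rho> j) \<le> lam\<^sup>2 / r j"
    using assms(2,3) weights_pos by (simp add: pos_le_divide_eq mult.commute)
  then have "sqrt (atom_cost (x j) (t j) (\<rho> j)) \<le> sqrt (lam\<^sup>2 / r j)"
    by (rule real_sqrt_le_mono)
  moreover have "\<rho> j \<le> 1 + sqrt (atom_cost (x j) (t j) (\<rho> j))"
    using assms atoms_on by (intro rho_le_atom_cost) (auto simp: admissible_config_def)
  ultimately show ?thesis
    by linarith
qed

section \<open>Attaining the dual bound\<close>

lemma switch_crossing: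
  assumes cost1: "lam\<^sup>2 \<le> config_cost t1 \<rho>1" and cost2: "config_cost t2 \<rho>2 \<le> lam\<^sup>2"
  shows "\<exists>k w. 0 \<le> w \<and> w \<le> 1 \<and> (k < N \<or> w = 0) \<and>
           config_cost (switch_prefix k t1 t2) (switch_prefix k \<rho>1 \<rho>2)
             + w * r k * (atom_cost (x k) (t1 k) (\<rho>1 k) - atom_cost (x k) (t2 k) (\<rho>2 k)) = lam\<^sup>2"
proof -
  define g where "g k = config_cost (switch_prefix k t1 t2) (switch_prefix k \<rho>1 \<rho>2)" for k
  have "g 0 \<le> lam\<^sup>2" "lam\<^sup>2 \<le> g N"
    using cost1 cost2 by (simp_all add: g_def switch_prefix_def config_cost_def)
  then obtain k where k: "k \<le> N" "g k \<le> lam\<^sup>2" "lam\<^sup>2 \<le> g (min (Suc k) N)"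
    using discrete_ivt by blast
  define d where "d = (if k < N then r k * (atom_cost (x k) (t1 k) (\<rho>1 k) - atom_cost (x k) (t2 k) (\<rho>2 k)) else 0)"
  have "g (min (Suc k) N) = g k + d"
  proof (cases "k < N")
    case True
    then have "g (Suc k) - g k = (\<Sum>j<N. if j = k then d else 0)"
      unfolding g_def config_cost_def sum_subtractf[symmetric]
      by (intro sum.cong) (auto simp: switch_prefix_def d_def algebra_simps)
    with True show ?thesis
      by simp
  qed (use k(1) in \<open>simp add: d_def\<close>)
  define w where "w = (if d = 0 then 0 else (lam\<^sup>2 - g k) / d)"
  have "0 \<le> w" "w \<le> 1" "g k + w * d = lam\<^sup>2"
    using k(2,3) \<open>g (min (Suc k) N) = g k + d\<close> by (auto simp: w_def divide_le_eq_1)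
  moreover have "k < N \<or> w = 0"
    by (auto simp: w_def d_def)
  moreover from this have "w * d = w * r k * (atom_cost (x k) (t1 k) (\<rho>1 k) - atom_cost (x k) (t2 k) (\<rho>2 k))"
    by (auto simp: d_def)
  ultimately show ?thesis
    unfolding g_def by (intro exI[of _ k] exI[of _ w]) simp
qed

lemma split_config_attains_dual_bound:
  assumes \<alpha>: "f_bound < \<alpha>" and opt: "optimal_config \<alpha> t \<rho>" and opt1: "optimal_config \<alpha> t1 \<rho>1"
    and w: "0 \<le> w" "w \<le> 1" and k_w: "k < N \<or> w = 0"
    and cost: "config_cost t \<rho> + w * r k * (atom_cost (x k) (t1 k) (\<rho>1 k) - atom_cost (x k) (t k) (\<rho> k)) = lam\<^sup>2"
  shows "sparse_attainable (config_value t1 \<rho>1 + \<alpha> * (lam\<^sup>2 - config_cost t1 \<rho>1))"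
proof -
  define u where "u j = r j - (if j = k then w * r k else 0)" for j
  have split: "(\<Sum>j<N. u j * a j) + w * r k * b = (\<Sum>j<N. r j * a j) + w * r k * (b - a k)" for a b
    unfolding u_def using k_w by (rule sum_split_atom)
  have cost_u: "(\<Sum>j<N. u j * atom_cost (x j) (t j) (\<rho> j)) + w * r k * atom_cost (x k) (t1 k) (\<rho>1 k) = lam\<^sup>2"
    using split[of "\<lambda>j. atom_cost (x j) (t j) (\<rho> j)" "atom_cost (x k) (t1 k) (\<rho>1 k)"] cost
    by (simp add: config_cost_def)
  have L_eq: "lagrangian f \<alpha> (x j) (t j) (\<rho> j) = lagrangian f \<alpha> (x j) (t1 j) (\<rho>1 j)" if "j < N" for j
    using opt opt1 that by (intro lagrangian_optimal_eq) (auto simp: optimal_config_def)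
  have "(\<Sum>j<N. u j * lagrangian f \<alpha> (x j) (t j) (\<rho> j)) + w * r k * lagrangian f \<alpha> (x k) (t1 k) (\<rho>1 k)
      = (\<Sum>j<N. r j * lagrangian f \<alpha> (x j) (t1 j) (\<rho>1 j))"
    using split[of "\<lambda>j. lagrangian f \<alpha> (x j) (t j) (\<rho> j)" "lagrangian f \<alpha> (x k) (t1 k) (\<rho>1 k)"] L_eq k_w
    by (auto intro: sum.cong)
  moreover have "w * r k * ((\<rho>1 k)\<^sup>2 * f (t1 k))
      = w * r k * lagrangian f \<alpha> (x k) (t1 k) (\<rho>1 k) + \<alpha> * (w * r k * atom_cost (x k) (t1 k) (\<rho>1 k))"
    by (simp add: lagrangian_def algebra_simps)
  moreover have "\<alpha> * (\<Sum>j<N. u j * atom_cost (x j) (t j) (\<rho> j)) + \<alpha> * (w * r k * atom_cost (x k) (t1 k) (\<rho>1 k))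
      = \<alpha> * lam\<^sup>2"
    using cost_u by (metis distrib_left)
  ultimately have "(\<Sum>j<N. u j * ((\<rho> j)\<^sup>2 * f (t j))) + w * r k * ((\<rho>1 k)\<^sup>2 * f (t1 k))
      = config_value t1 \<rho>1 + \<alpha> * (lam\<^sup>2 - config_cost t1 \<rho>1)"
    using sum_gain_eq[where c = u and \<rho> = \<rho> and t = t and y = x and I = "{..<N}" and \<alpha> = \<alpha> and f = f]
      config_value_eq[of t1 \<rho>1 \<alpha>]
    unfolding right_diff_distrib by linarith
  moreover have "sparse_attainable ((\<Sum>j<N. u j * ((\<rho> j)\<^sup>2 * f (t j))) + w * r k * ((\<rho>1 k)\<^sup>2 * f (t1 k)) + 0 * f f_argmax)"
  proof (rule config_plan)
    show "\<forall>j<N. 0 \<le> u j"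
      using weights_pos w by (auto simp: u_def mult_le_cancel_right1 less_imp_le)
    show "0 \<le> w * r k"
      using w(1) k_w weights_pos by (auto intro: less_imp_le)
    show "w * r k = 0 \<or> (x k \<in> S1 \<and> t1 k \<in> S1 \<and> 0 \<le> \<rho>1 k)"
      using k_w opt1 atoms_on by (auto simp: optimal_config_def optimal_atom_def)
    show "(\<Sum>j<N. u j * indicator A (x j)) + w * r k * indicator A (x k) = (\<Sum>j<N. r j * indicator A (x j))" for A
      using split[of "\<lambda>j. indicator A (x j)"] by simp
  qed (use opt optimal_config_admissible cost_u f_argmax(1) in auto)
  ultimately show ?thesis
    by simp
qed

text \<open>Two optimal configurations at the same multiplier whose costs lie on either side of
  \<open>lam\<^sup>2\<close>: switching the atoms one at a time from one to the other and splitting the atom at which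
  the cost crosses \<open>lam\<^sup>2\<close> gives a plan of cost exactly \<open>lam\<^sup>2\<close>. All optimal responses have the same
  Lagrangian value, so this plan attains the dual bound.\<close>

lemma sparse_maximizer_of_optimal_pair:
  assumes \<alpha>: "f_bound < \<alpha>"
    and opt1: "optimal_config \<alpha> t1 \<rho>1" and cost1: "lam\<^sup>2 \<le> config_cost t1 \<rho>1"
    and opt2: "optimal_config \<alpha> t2 \<rho>2" and cost2: "config_cost t2 \<rho>2 \<le> lam\<^sup>2"
  shows "\<exists>V. sparse_attainable V \<and> upper_value V"
proof -
  obtain k w where w: "0 \<le> w" "w \<le> 1" and k_w: "k < N \<or> w = 0"
    and crossing: "config_cost (switch_prefix k t1 t2) (switch_prefix k \<rho>1 \<rho>2)
      + w * r k * (atom_cost (x k) (t1 k) (\<rho>1 k) - atom_cost (x k) (t2 k) (\<rho>2 k)) = lam\<^sup>2"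
    using switch_crossing[OF cost1 cost2] by blast
  have "w * r k * atom_cost (x k) (switch_prefix k t1 t2 k) (switch_prefix k \<rho>1 \<rho>2 k)
      = w * r k * atom_cost (x k) (t2 k) (\<rho>2 k)"
    using k_w by (auto simp: switch_prefix_def)
  with crossing have "config_cost (switch_prefix k t1 t2) (switch_prefix k \<rho>1 \<rho>2)
      + w * r k * (atom_cost (x k) (t1 k) (\<rho>1 k) - atom_cost (x k) (switch_prefix k t1 t2 k) (switch_prefix k \<rho>1 \<rho>2 k))
      = lam\<^sup>2"
    unfolding right_diff_distrib by linarith
  moreover have "optimal_config \<alpha> (switch_prefix k t1 t2) (switch_prefix k \<rho>1 \<rho>2)"
    using opt1 opt2 by (simp add: optimal_config_def switch_prefix_def)
  ultimately have "sparse_attainable (config_value t1 \<rho>1 + \<alpha> * (lam\<^sup>2 - config_cost t1 \<rho>1))"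
    using split_config_attains_dual_bound[OF \<alpha> _ opt1 w k_w] by blast
  moreover have "upper_value (config_value t1 \<rho>1 + \<alpha> * (lam\<^sup>2 - config_cost t1 \<rho>1))"
    using \<alpha> opt1 by (rule upper_value_optimal_config)
  ultimately show ?thesis
    by auto
qed

definition overspends :: "real \<Rightarrow> bool" where
  "overspends \<alpha> \<longleftrightarrow> (\<exists>t \<rho>. optimal_config \<alpha> t \<rho> \<and> lam\<^sup>2 \<le> config_cost t \<rho>)"

lemma overspends_le:
  assumes "0 < lam" "overspends \<alpha>"
  shows "\<alpha> \<le> 2 * f_bound + (\<Sum>j<N. r j * \<bar>2 * f_bound - f (x j)\<bar>) / lam\<^sup>2"
proof -
  define Q where "Q = (\<Sum>j<N. r j * \<bar>2 * f_bound - f (x j)\<bar>)"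
  obtain t \<rho> where opt: "optimal_config \<alpha> t \<rho>" and cost: "lam\<^sup>2 \<le> config_cost t \<rho>"
    using assms(2) unfolding overspends_def by blast
  have "(\<alpha> - 2 * f_bound) * lam\<^sup>2 \<le> Q"
  proof (cases "0 \<le> \<alpha> - 2 * f_bound")
    case True
    with cost have "(\<alpha> - 2 * f_bound) * lam\<^sup>2 \<le> (\<alpha> - 2 * f_bound) * config_cost t \<rho>"
      by (rule mult_left_mono)
    with optimal_config_cost_le[OF opt] show ?thesis
      by (simp add: Q_def)
  next
    case False
    then have "(\<alpha> - 2 * f_bound) * lam\<^sup>2 \<le> 0"
      by (intro mult_nonpos_nonneg) auto
    moreover have "0 \<le> Q"
      unfolding Q_def using weights_nonneg by (intro sum_nonneg) auto
    ultimately show ?thesis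
      by linarith
  qed
  then have "\<alpha> - 2 * f_bound \<le> Q / lam\<^sup>2"
    using assms(1) by (simp add: pos_le_divide_eq)
  then show ?thesis
    by (simp add: Q_def)
qed

lemma overspends_limit:
  assumes "\<alpha>s \<longlonglongrightarrow> \<alpha>" "f_bound < \<alpha>" "\<forall>n. overspends (\<alpha>s n)"
  shows "overspends \<alpha>"
proof -
  have "\<forall>n. \<exists>p. optimal_config (\<alpha>s n) (fst p) (snd p) \<and> lam\<^sup>2 \<le> config_cost (fst p) (snd p)"
    using assms(3) by (auto simp: overspends_def)
  from choice[OF this] obtain p
    where "\<forall>n. optimal_config (\<alpha>s n) (fst (p n)) (snd (p n)) \<and> lam\<^sup>2 \<le> config_cost (fst (p n)) (snd (p n))"
    by blast
  then show ?thesis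
    using optimal_configs_limit[OF assms(1,2), of "\<lambda>n. fst (p n)" "\<lambda>n. snd (p n)" "{lam\<^sup>2..}"]
    by (auto simp: overspends_def)
qed

lemma optimal_config_within_budget:
  assumes "\<alpha>s \<longlonglongrightarrow> \<alpha>" "f_bound < \<alpha>" "\<And>n. f_bound < \<alpha>s n" "\<And>n. \<not> overspends (\<alpha>s n)"
  shows "\<exists>t \<rho>. optimal_config \<alpha> t \<rho> \<and> config_cost t \<rho> \<le> lam\<^sup>2"
proof -
  have "\<exists>ts \<rho>s. \<forall>n. optimal_config (\<alpha>s n) (ts n) (\<rho>s n)"
    using assms(3) by (rule optimal_configs_exist)
  then obtain ts \<rho>s where opt: "\<forall>n. optimal_config (\<alpha>s n) (ts n) (\<rho>s n)"
    by blast
  have "config_cost (ts n) (\<rho>s n) \<le> lam\<^sup>2" for n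
    using assms(4)[of n] opt unfolding overspends_def by (meson less_imp_le not_le)
  then have "\<forall>n. config_cost (ts n) (\<rho>s n) \<in> {..lam\<^sup>2}"
    by simp
  then show ?thesis
    using optimal_configs_limit[OF assms(1,2) opt, of "{..lam\<^sup>2}"] by auto
qed

text \<open>The critical multiplier is the supremum of the overspending ones.\<close>

lemma sparse_maximizer_overspending:
  assumes "0 < lam" and \<alpha>0: "f_bound < \<alpha>0" "overspends \<alpha>0"
  shows "\<exists>V. sparse_attainable V \<and> upper_value V"
proof -
  define S where "S = {\<alpha>. f_bound < \<alpha> \<and> overspends \<alpha>}"
  have bdd: "bdd_above S"
    unfolding S_def
    by (rule bdd_aboveI[of _ "2 * f_bound + (\<Sum>j<N. r j * \<bar>2 * f_bound - f (x j)\<bar>) / lam\<^sup>2"])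
      (use overspends_le[OF \<open>0 < lam\<close>] in blast)
  have "\<alpha>0 \<in> S"
    using \<alpha>0 by (simp add: S_def)
  define \<alpha>' where "\<alpha>' = Sup S"
  have "\<alpha>0 \<le> \<alpha>'"
    unfolding \<alpha>'_def using \<open>\<alpha>0 \<in> S\<close> bdd by (rule cSup_upper)
  then have "f_bound < \<alpha>'"
    using \<alpha>0(1) by linarith
  have "\<alpha>' \<in> closure S"
    unfolding \<alpha>'_def using \<open>\<alpha>0 \<in> S\<close> bdd by (intro closure_contains_Sup) auto
  then obtain \<alpha>l where "\<forall>n. \<alpha>l n \<in> S" "\<alpha>l \<longlonglongrightarrow> \<alpha>'"
    unfolding closure_sequential by blast
  then have "overspends \<alpha>'"
    using \<open>f_bound < \<alpha>'\<close> by (intro overspends_limit[of \<alpha>l]) (auto simp: S_def)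
  then obtain t1 \<rho>1 where opt1: "optimal_config \<alpha>' t1 \<rho>1" and cost1: "lam\<^sup>2 \<le> config_cost t1 \<rho>1"
    by (auto simp: overspends_def)
  define \<alpha>r where "\<alpha>r n = \<alpha>' + inverse (real (Suc n))" for n
  have \<alpha>r: "\<And>n. \<alpha>' < \<alpha>r n" "\<alpha>r \<longlonglongrightarrow> \<alpha>'"
    unfolding \<alpha>r_def by (simp, rule LIMSEQ_inverse_real_of_nat_add)
  have "\<not> overspends (\<alpha>r n)" for n
  proof
    assume "overspends (\<alpha>r n)"
    then have "\<alpha>r n \<le> \<alpha>'"
      unfolding \<alpha>'_def using bdd \<alpha>r(1)[of n] \<open>f_bound < \<alpha>'\<close> by (intro cSup_upper) (auto simp: S_def)
    with \<alpha>r(1)[of n] show False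
      by simp
  qed
  then obtain t2 \<rho>2 where opt2: "optimal_config \<alpha>' t2 \<rho>2" and cost2: "config_cost t2 \<rho>2 \<le> lam\<^sup>2"
    using optimal_config_within_budget[OF \<alpha>r(2) \<open>f_bound < \<alpha>'\<close>] \<alpha>r(1) \<open>f_bound < \<alpha>'\<close>
    by (meson order.strict_trans)
  show ?thesis
    using sparse_maximizer_of_optimal_pair[OF \<open>f_bound < \<alpha>'\<close> opt1 cost1 opt2 cost2] .
qed

text \<open>If no multiplier overspends, the optimal configurations for multipliers decreasing to
  \<open>f_bound\<close> leave part of the budget unused in the limit; it is spent on creating mass at a
  maximum point of \<open>f\<close>, which is worthwhile only if \<open>f\<close> is positive there.\<close>

lemma sparse_maximizer_no_overspending:
  assumes no: "\<And>\<alpha>. f_bound < \<alpha> \<Longrightarrow> \<not> overspends \<alpha>"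
  shows "\<exists>V. sparse_attainable V \<and> upper_value V"
proof -
  define \<alpha>s where "\<alpha>s n = f_bound + inverse (real (Suc n))" for n
  have \<alpha>s: "\<And>n. f_bound < \<alpha>s n" "\<alpha>s \<longlonglongrightarrow> f_bound"
    unfolding \<alpha>s_def by (simp, rule LIMSEQ_inverse_real_of_nat_add)
  have "\<exists>ts \<rho>s. \<forall>n. optimal_config (\<alpha>s n) (ts n) (\<rho>s n)"
    using \<alpha>s(1) by (rule optimal_configs_exist)
  then obtain ts \<rho>s where opt: "\<And>n. optimal_config (\<alpha>s n) (ts n) (\<rho>s n)"
    by blast
  then have adm: "\<And>n. admissible_config (ts n) (\<rho>s n)"
    by (rule optimal_config_admissible)
  have cheap: "config_cost (ts n) (\<rho>s n) \<le> lam\<^sup>2" for n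
    using no[OF \<alpha>s(1)] opt unfolding overspends_def by (meson less_imp_le not_le)
  have "\<rho>s n j \<le> 1 + sqrt (lam\<^sup>2 / r j)" if "j < N" for n j
    using adm cheap that by (rule admissible_rho_le_budget)
  then obtain rr t \<rho> where rr: "strict_mono rr" and adm_t: "admissible_config t \<rho>"
    and lim: "configs_tendsto (\<lambda>n. ts (rr n)) (\<lambda>n. \<rho>s (rr n)) t \<rho>"
    using config_convergent_subseq[of ts \<rho>s "\<lambda>j. 1 + sqrt (lam\<^sup>2 / r j)", OF adm] by blast
  have cost: "config_cost t \<rho> \<le> lam\<^sup>2"
    using config_cost_tendsto[OF lim] cheap by (intro LIMSEQ_le_const2) auto
  define m where "m = (if 0 < f f_argmax then lam\<^sup>2 - config_cost t \<rho> else 0)"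
  have "sparse_attainable ((\<Sum>j<N. r j * ((\<rho> j)\<^sup>2 * f (t j))) + 0 * (0\<^sup>2 * f 0) + m * f f_argmax)"
    using adm_t weights_nonneg cost f_argmax(1)
    by (intro config_plan) (auto simp: m_def config_cost_def)
  moreover have "m * f f_argmax = f_bound * (lam\<^sup>2 - config_cost t \<rho>)"
    by (simp add: m_def f_bound_def)
  moreover have "upper_value (config_value t \<rho> + f_bound * (lam\<^sup>2 - config_cost t \<rho>))"
  proof (rule upper_value_limit[OF \<alpha>s(1) opt lim adm_t])
    have penalty: "(\<lambda>n. \<alpha>s (rr n) * (lam\<^sup>2 - config_cost (ts (rr n)) (\<rho>s (rr n))))
        \<longlonglongrightarrow> f_bound * (lam\<^sup>2 - config_cost t \<rho>)"
      using LIMSEQ_subseq_LIMSEQ[OF \<alpha>s(2) rr] config_cost_tendsto[OF lim]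
      by (intro tendsto_intros) (simp_all add: o_def)
    show "eventually (\<lambda>n. \<alpha>s (rr n) * (lam\<^sup>2 - config_cost (ts (rr n)) (\<rho>s (rr n)))
        < f_bound * (lam\<^sup>2 - config_cost t \<rho>) + e) sequentially" if "0 < e" for e
      using order_tendstoD(2)[OF penalty, of "f_bound * (lam\<^sup>2 - config_cost t \<rho>) + e"] that by simp
  qed
  ultimately show ?thesis
    by (auto simp: config_value_def)
qed

text \<open>For \<open>lam = 0\<close> the multiplier is sent to infinity, which forces the cost of the optimal
  configurations to zero.\<close>

lemma sparse_maximizer_radius_zero:
  assumes "lam = 0"
  shows "\<exists>V. sparse_attainable V \<and> upper_value V"
proof -
  define \<alpha>s where "\<alpha>s n = 2 * f_bound + 1 + real n" for n
  have \<alpha>s: "f_bound + 1 \<le> \<alpha>s n" "f_bound < \<alpha>s n" for n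
    using f_bound_nonneg by (simp_all add: \<alpha>s_def)
  have "\<exists>ts \<rho>s. \<forall>n. optimal_config (\<alpha>s n) (ts n) (\<rho>s n)"
    using \<alpha>s(2) by (rule optimal_configs_exist)
  then obtain ts \<rho>s where opt: "\<And>n. optimal_config (\<alpha>s n) (ts n) (\<rho>s n)"
    by blast
  then have adm: "\<And>n. admissible_config (ts n) (\<rho>s n)"
    by (rule optimal_config_admissible)
  have "\<rho>s n j \<le> 2 + 2 * f_bound / (f_bound + 1 - f_bound)" if "j < N" for n j
    using optimal_atom_rho_le[of "f_bound + 1" "\<alpha>s n" j "ts n j" "\<rho>s n j"] \<alpha>s opt[of n] that
    by (simp add: optimal_config_def)
  then obtain rr t \<rho> where rr: "strict_mono rr" and adm_t: "admissible_config t \<rho>"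
    and lim: "configs_tendsto (\<lambda>n. ts (rr n)) (\<lambda>n. \<rho>s (rr n)) t \<rho>"
    using config_convergent_subseq[of ts \<rho>s "\<lambda>_. 2 + 2 * f_bound / (f_bound + 1 - f_bound)", OF adm]
    by blast
  define Q where "Q = (\<Sum>j<N. r j * \<bar>2 * f_bound - f (x j)\<bar>)"
  have "config_cost (ts n) (\<rho>s n) \<le> Q * inverse (real (Suc n))" for n
    using optimal_config_cost_le[OF opt[of n]] by (simp add: Q_def \<alpha>s_def field_simps)
  moreover have "(\<lambda>n. Q * inverse (real (Suc (rr n)))) \<longlonglongrightarrow> 0"
    using LIMSEQ_subseq_LIMSEQ[OF tendsto_mult_right_zero[OF LIMSEQ_inverse_real_of_nat] rr]
    by (simp add: o_def)
  ultimately have cost: "config_cost t \<rho> \<le> lam\<^sup>2"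
    using config_cost_tendsto[OF lim] assms by (auto intro: LIMSEQ_le)
  have "sparse_attainable ((\<Sum>j<N. r j * ((\<rho> j)\<^sup>2 * f (t j))) + 0 * (0\<^sup>2 * f 0) + 0 * f f_argmax)"
    using adm_t weights_nonneg cost f_argmax(1)
    by (intro config_plan) (auto simp: config_cost_def)
  moreover have "upper_value (config_value t \<rho> + 0)"
  proof (rule upper_value_limit[OF \<alpha>s(2) opt lim adm_t])
    have "\<alpha>s n * (lam\<^sup>2 - config_cost (ts n) (\<rho>s n)) \<le> 0" for n
      using \<alpha>s(1)[of n] f_bound_nonneg config_cost_nonneg assms by (intro mult_nonneg_nonpos) auto
    then show "eventually (\<lambda>n. \<alpha>s (rr n) * (lam\<^sup>2 - config_cost (ts (rr n)) (\<rho>s (rr n))) < 0 + e) sequentially"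
      if "0 < e" for e
      using that by (auto intro!: always_eventually intro: le_less_trans)
  qed
  ultimately show ?thesis
    by (auto simp: config_value_def)
qed

lemma exists_sparse_maximizer: "\<exists>V. sparse_attainable V \<and> upper_value V"
proof (cases "lam = 0")
  case True
  then show ?thesis
    by (rule sparse_maximizer_radius_zero)
next
  case False
  then have "0 < lam"
    using lam by simp
  then show ?thesis
    using sparse_maximizer_overspending sparse_maximizer_no_overspending by blast
qed

end

theorem theorem4p3:
  fixes f :: "complex \<Rightarrow> real" and lam :: real and \<mu>1 :: "complex measure"
    and N :: nat and r :: "nat \<Rightarrow> real" and x :: "nat \<Rightarrow> complex"
  assumes usc: "usc_on_S1 f"
    and lam: "lam \<ge> 0"
    and mu1: "\<mu>1 \<in> Mplus_S1"
    and atoms_on: "\<forall>j<N. x j \<in> S1"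
    and atoms_distinct: "inj_on x {..<N}"
    and weights_pos: "\<forall>j<N. r j > 0"
    and mu1_eq: "\<forall>A \<in> sets \<mu>1. emeasure \<mu>1 A = (\<Sum>j<N. ennreal (r j) * indicator A (x j))"
  shows "\<exists>\<mu>0 \<in> WFR_ball lam \<mu>1.
           (\<forall>\<nu> \<in> WFR_ball lam \<mu>1. ext_integral f \<nu> \<le> ext_integral f \<mu>0)
         \<and> (\<exists>P. finite P \<and> P \<subseteq> S1 \<and> card P \<le> N + 2 \<and> emeasure \<mu>0 (S1 - P) = 0)"
proof -
  interpret atomic_target f lam \<mu>1 N r x
    using assms by unfold_locales
  obtain V \<mu>0 where "\<mu>0 \<in> WFR_ball lam \<mu>1" "ext_integral f \<mu>0 = ereal V" "has_at_most_atoms (N + 2) \<mu>0"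
    and "\<forall>\<nu>\<in>WFR_ball lam \<mu>1. ext_integral f \<nu> \<le> ereal V"
    using exists_sparse_maximizer unfolding sparse_attainable_def upper_value_def by blast
  then show ?thesis
    unfolding has_at_most_atoms_def by (intro bexI[of _ \<mu>0]) auto
qed

end
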